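(* Let $n\ge 1$ and let $$C^{n,1}=\{(z_0,\dots,z_n)\in\mathbb{C}^{n+1}: -|z_0|^2+|z_1|^2+\cdots+|z_n|^2<0\}.$$ Let $f=(f_0,f_1,\dots,f_n)$ be a biholomorphic self-map of $C^{n,1}$. Then there exist a nowhere vanishing holomorphic function $c$ on the unit ball $\mathbb{B}^n=\{w\in\mathbb{C}^n:|w_1|^2+\cdots+|w_n|^2<1\}$ and a matrix $(a_{ij})_{0\le i,j\le n}$ representing an element of $PU(n,1)$ such that either $$f_0(z_0,\dots,z_n)=c\Big(\frac{z_1}{z_0},\dots,\frac{z_n}{z_0}\Big)\,z_0\quad\text{for all } z\in C^{n,1},$$ or $$f_0(z_0,\dots,z_n)=c\Big(\frac{z_1}{z_0},\dots,\frac{z_n}{z_0}\Big)\,z_0^{-1}\quad\text{for all } z\in C^{n,1},$$ and, for $i=1,\dots,n$, $$f_i(z_0,\dots,z_n)=f_0(z_0,\dots,z_n)\,\frac{\sum_{j=0}^n a_{ij}z_j}{\sum_{j=0}^n a_{0j}z_j}.$$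
   Context: $U(n,1)=\{A\in GL(n+1,\mathbb{C}): A^*JA=J\}$ with $J=\mathrm{diag}(-1,1,\dots,1)$, and $PU(n,1)$ is its quotient by scalar matrices. Note $z_0\neq 0$ on $C^{n,1}$. *)

theory Defs
  imports "HOL-Analysis.Analysis"
begin

text \<open>C^n = complex^'n, C^(n+1) = complex^('n option), coordinate None playing the role of z_0
  and Some i the role of z_1..z_n.\<close>

definition cholo_on :: "(complex^'a::finite) set \<Rightarrow> (complex^'a \<Rightarrow> complex) \<Rightarrow> bool" where
  "cholo_on S g \<longleftrightarrow> (\<forall>z\<in>S. \<exists>L. (g has_derivative L) (at z) \<and> (\<forall>c v. L (c *s v) = c * L v))"

definition vholo_on :: "(complex^'a::finite) set \<Rightarrow> (complex^'a \<Rightarrow> complex^'b::finite) \<Rightarrow> bool" where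
  "vholo_on S f \<longleftrightarrow> (\<forall>i. cholo_on S (\<lambda>z. f z $ i))"

definition biholo_self :: "(complex^'a::finite) set \<Rightarrow> (complex^'a \<Rightarrow> complex^'a) \<Rightarrow> bool" where
  "biholo_self S f \<longleftrightarrow> bij_betw f S S \<and> vholo_on S f \<and> vholo_on S (inv_into S f)"

definition Cn1 :: "(complex^('n::finite option)) set" where
  "Cn1 = {z. - (cmod (z $ None))\<^sup>2 + (\<Sum>i\<in>(UNIV::'n set). (cmod (z $ Some i))\<^sup>2) < 0}"

definition Jn1 :: "complex^('n::finite option)^('n option)" where
  "Jn1 = (\<chi> i j. if i = j then (if i = None then -1 else 1) else 0)"

definition conj_transpose :: "complex^'a::finite^'a \<Rightarrow> complex^'a^'a" where
  "conj_transpose A = (\<chi> i j. cnj (A $ j $ i))"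

definition U_n1 :: "(complex^('n::finite option)^('n option)) set" where
  "U_n1 = {A. conj_transpose A ** Jn1 ** A = Jn1}"

definition PU_rep :: "complex^('n::finite option)^('n option) \<Rightarrow> bool" where
  "PU_rep A \<longleftrightarrow> (\<exists>s U. s \<noteq> 0 \<and> U \<in> U_n1 \<and> A = (\<chi> i j. s * U $ i $ j))"

end

theory Submission
  imports Defs "HOL-Complex_Analysis.Complex_Analysis"
begin

text \<open>A biholomorphism \<open>f\<close> of \<open>C\<^sup>n\<^sup>,\<^sup>1\<close> maps every punctured complex line \<open>\<complex>\<^sup>* z\<close> onto a
  punctured line: along the line the ratios \<open>f\<^sub>i/f\<^sub>0\<close> are bounded holomorphic functions on \<open>\<complex>\<^sup>*\<close>,
  hence constant by the removable singularity theorem and Liouville. So \<open>f\<close> descends to a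
  biholomorphism of the ball, the projectivisation of the cone. After composing with a boost in
  \<open>U(n,1)\<close> it fixes the origin, Schwarz's lemma applied to it and its inverse makes it a unitary
  map, and therefore the induced map is the Moebius transformation of some \<open>A \<in> U(n,1)\<close>.
  On each fibre, \<open>t \<mapsto> f\<^sub>0(t z)\<close> is an automorphism of \<open>\<complex>\<^sup>*\<close>, hence \<open>c t\<close> or \<open>c/t\<close>; the
  exponent \<open>\<plusminus>1\<close> depends continuously on the fibre and is therefore the same for all of them.\<close>

no_notation fps_nth (infixl \<open>$\<close> 75)

section \<open>The cone and its affine chart\<close>

lemma sum_option_UNIV:
  fixes f :: "'n::finite option \<Rightarrow> 'b::comm_monoid_add"
  shows "(\<Sum>k\<in>UNIV. f k) = f None + (\<Sum>i\<in>UNIV. f (Some i))"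
proof -
  have "(\<Sum>k\<in>UNIV. f k) = (\<Sum>k\<in>insert None (range Some). f k)"
    by (simp add: UNIV_option_conv)
  also have "\<dots> = f None + (\<Sum>k\<in>range Some. f k)"
    by (subst sum.insert) auto
  also have "(\<Sum>k\<in>range Some. f k) = (\<Sum>i\<in>UNIV. f (Some i))"
    by (subst sum.reindex) (auto simp: inj_on_def)
  finally show ?thesis .
qed

lemma norm_vec_power2: "(norm (w::complex^'n::finite))\<^sup>2 = (\<Sum>i\<in>UNIV. (cmod (w$i))\<^sup>2)"
  unfolding norm_vec_def L2_set_def by (simp add: sum_nonneg)

lemma norm_smult_vec: "norm (c *s (x::complex^'n::finite)) = cmod c * norm x"
proof -
  have "(norm (c *s x))\<^sup>2 = (cmod c * norm x)\<^sup>2"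
    by (simp add: norm_vec_power2 norm_mult power_mult_distrib sum_distrib_left)
  then show ?thesis by (simp add: power2_eq_iff_nonneg)
qed

definition lift :: "complex^'n::finite \<Rightarrow> complex^('n option)" where
  "lift w = (\<chi> j. case j of None \<Rightarrow> 1 | Some i \<Rightarrow> w $ i)"

definition chart :: "complex^('n::finite option) \<Rightarrow> complex^'n" where
  "chart z = (\<chi> i. z $ Some i / z $ None)"

definition hform :: "complex^('n::finite option) \<Rightarrow> real" where
  "hform z = - (cmod (z $ None))\<^sup>2 + (\<Sum>i\<in>UNIV. (cmod (z $ Some i))\<^sup>2)"

lemma lift_None [simp]: "lift w $ None = 1"
  and lift_Some [simp]: "lift w $ Some i = w $ i"
  by (simp_all add: lift_def)

lemma chart_nth [simp]: "chart z $ i = z $ Some i / z $ None"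
  by (simp add: chart_def)

lemma chart_lift [simp]: "chart (lift w) = w"
  by (simp add: vec_eq_iff)

lemma chart_smult: "c \<noteq> 0 \<Longrightarrow> chart (c *s z) = chart z"
  by (simp add: vec_eq_iff)

lemma smult_lift_chart: "z $ None \<noteq> 0 \<Longrightarrow> z = (z $ None) *s lift (chart z)"
  unfolding vec_eq_iff by (auto simp: lift_def split: option.split)

lemma Cn1_iff_hform: "z \<in> Cn1 \<longleftrightarrow> hform z < 0"
  by (simp add: Cn1_def hform_def)

lemma hform_smult: "hform (c *s z) = (cmod c)\<^sup>2 * hform z"
  by (simp add: hform_def norm_mult power_mult_distrib sum_distrib_left algebra_simps)

lemma hform_lift: "hform (lift w) = (norm w)\<^sup>2 - 1"
  by (simp add: hform_def norm_vec_power2)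

lemma Cn1_coord_less:
  assumes "z \<in> Cn1"
  shows "cmod (z $ Some i) < cmod (z $ None)"
proof -
  have "(\<Sum>i\<in>UNIV. (cmod (z $ Some i))\<^sup>2) < (cmod (z $ None))\<^sup>2"
    using assms by (simp add: Cn1_iff_hform hform_def)
  moreover have "(cmod (z $ Some i))\<^sup>2 \<le> (\<Sum>i\<in>UNIV. (cmod (z $ Some i))\<^sup>2)"
    by (rule member_le_sum) auto
  ultimately show ?thesis by (simp add: power2_less_imp_less)
qed

lemma Cn1_coord0_nonzero: "z \<in> Cn1 \<Longrightarrow> z $ None \<noteq> 0"
  using Cn1_coord_less[of z undefined] by auto

lemma Cn1_coord_ratio_less: "z \<in> Cn1 \<Longrightarrow> cmod (z $ Some i / z $ None) < 1"
  using Cn1_coord_less[of z i] Cn1_coord0_nonzero[of z] by (simp add: norm_divide divide_less_eq)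

lemma smult_lift_in_Cn1: "t \<noteq> 0 \<Longrightarrow> t *s lift w \<in> Cn1 \<longleftrightarrow> norm w < 1"
  by (simp add: Cn1_iff_hform hform_smult hform_lift mult_less_0_iff power_less_one_iff)

lemma lift_in_Cn1: "lift w \<in> Cn1 \<longleftrightarrow> norm w < 1"
  using smult_lift_in_Cn1[of 1 w] by simp

lemma smult_in_Cn1: "z \<in> Cn1 \<Longrightarrow> t \<noteq> 0 \<Longrightarrow> t *s z \<in> Cn1"
  by (simp add: Cn1_iff_hform hform_smult mult_pos_neg)

lemma chart_in_ball: "z \<in> Cn1 \<Longrightarrow> chart z \<in> ball 0 1"
  using smult_lift_chart[of z] Cn1_coord0_nonzero[of z] smult_lift_in_Cn1[of "z $ None" "chart z"]
  by auto

section \<open>Holomorphic maps of several complex variables\<close>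

definition complex_linear :: "(complex^'a::finite \<Rightarrow> complex) \<Rightarrow> bool" where
  "complex_linear L \<longleftrightarrow> (\<forall>c v. L (c *s v) = c * L v)"

lemma cholo_onI:
  assumes "\<And>z. z \<in> S \<Longrightarrow> \<exists>L. (g has_derivative L) (at z) \<and> complex_linear L"
  shows "cholo_on S g"
  using assms unfolding cholo_on_def complex_linear_def by blast

lemma cholo_onE:
  assumes "cholo_on S g" "z \<in> S"
  obtains L where "(g has_derivative L) (at z)" "complex_linear L"
  using assms unfolding cholo_on_def complex_linear_def by blast

lemma cholo_const: "cholo_on S (\<lambda>z. c)"
  by (rule cholo_onI, rule exI[of _ "\<lambda>h. 0"]) (auto simp: complex_linear_def)

lemma cholo_nth: "cholo_on S (\<lambda>z. z $ i)"
  by (rule cholo_onI, rule exI[of _ "\<lambda>h. h $ i"])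
    (auto simp: complex_linear_def intro: bounded_linear_imp_has_derivative bounded_linear_vec_nth)

lemma cholo_add: "cholo_on S f \<Longrightarrow> cholo_on S g \<Longrightarrow> cholo_on S (\<lambda>z. f z + g z)"
proof (rule cholo_onI)
  fix z assume "cholo_on S f" "cholo_on S g" "z \<in> S"
  then obtain L1 L2 where "(f has_derivative L1) (at z)" "complex_linear L1"
    and "(g has_derivative L2) (at z)" "complex_linear L2"
    by (metis cholo_onE)
  then show "\<exists>L. ((\<lambda>z. f z + g z) has_derivative L) (at z) \<and> complex_linear L"
    by (intro exI[of _ "\<lambda>h. L1 h + L2 h"])
      (auto intro: has_derivative_add simp: complex_linear_def algebra_simps)
qed

lemma cholo_mult: "cholo_on S f \<Longrightarrow> cholo_on S g \<Longrightarrow> cholo_on S (\<lambda>z. f z * g z)"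
proof (rule cholo_onI)
  fix z assume "cholo_on S f" "cholo_on S g" "z \<in> S"
  then obtain L1 L2 where "(f has_derivative L1) (at z)" "complex_linear L1"
    and "(g has_derivative L2) (at z)" "complex_linear L2"
    by (metis cholo_onE)
  then show "\<exists>L. ((\<lambda>z. f z * g z) has_derivative L) (at z) \<and> complex_linear L"
    by (intro exI[of _ "\<lambda>h. f z * L2 h + L1 h * g z"] conjI has_derivative_mult)
      (auto simp: complex_linear_def algebra_simps)
qed

lemma cholo_divide:
  assumes "cholo_on S f" "cholo_on S g" "\<And>z. z \<in> S \<Longrightarrow> g z \<noteq> 0"
  shows "cholo_on S (\<lambda>z. f z / g z)"
proof (rule cholo_onI)
  fix z assume "z \<in> S"
  then obtain L1 L2 where "(f has_derivative L1) (at z)" "complex_linear L1"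
    and "(g has_derivative L2) (at z)" "complex_linear L2"
    using assms by (metis cholo_onE)
  with assms(3)[OF \<open>z \<in> S\<close>]
  show "\<exists>L. ((\<lambda>z. f z / g z) has_derivative L) (at z) \<and> complex_linear L"
    by (intro exI[of _ "\<lambda>h. (L1 h * g z - f z * L2 h) / (g z * g z)"])
      (intro conjI has_derivative_divide', auto simp: complex_linear_def algebra_simps)
qed

lemma cholo_sum:
  "finite A \<Longrightarrow> (\<And>a. a \<in> A \<Longrightarrow> cholo_on S (f a)) \<Longrightarrow> cholo_on S (\<lambda>z. \<Sum>a\<in>A. f a z)"
  by (induction A rule: finite_induct) (auto intro: cholo_add cholo_const)

lemma has_derivative_vecI:
  fixes F :: "'a::euclidean_space \<Rightarrow> complex^'b::finite"
  assumes d: "\<And>i. ((\<lambda>x. F x $ i) has_derivative (\<lambda>h. L h $ i)) (at x)"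
  shows "(F has_derivative L) (at x)"
proof -
  have lin: "\<And>i. linear (\<lambda>h. L h $ i)"
    using d has_derivative_bounded_linear bounded_linear.linear by blast
  have "linear L"
  proof (rule linearI)
    fix u v show "L (u + v) = L u + L v"
      using linear_add[OF lin] by (simp add: vec_eq_iff)
  next
    fix r u show "L (r *\<^sub>R u) = r *\<^sub>R L u"
      using linear_cmul[OF lin] by (simp add: vec_eq_iff)
  qed
  then have "bounded_linear L" by (simp add: linear_conv_bounded_linear)
  moreover have "((\<lambda>y. (F y - F x - L (y - x)) /\<^sub>R norm (y - x)) \<longlongrightarrow> 0) (at x)"
  proof (rule vec_tendstoI)
    fix i
    have "((\<lambda>y. (F y $ i - F x $ i - L (y - x) $ i) /\<^sub>R norm (y - x)) \<longlongrightarrow> 0) (at x)"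
      using d[of i] unfolding has_derivative_at_within by simp
    then show "((\<lambda>y. ((F y - F x - L (y - x)) /\<^sub>R norm (y - x)) $ i) \<longlongrightarrow> 0 $ i) (at x)"
      by simp
  qed
  ultimately show ?thesis unfolding has_derivative_at_within by simp
qed

lemma vholo_on_has_derivative:
  assumes "vholo_on S F" "z \<in> S"
  obtains L where "(F has_derivative L) (at z)" "\<And>c h. L (c *s h) = c *s L h"
proof -
  have "\<forall>i. \<exists>L. ((\<lambda>z. F z $ i) has_derivative L) (at z) \<and> complex_linear L"
    using assms unfolding vholo_on_def by (metis cholo_onE)
  then obtain Lf where Lf: "\<And>i. ((\<lambda>z. F z $ i) has_derivative Lf i) (at z) \<and> complex_linear (Lf i)"
    by metis
  show thesis
  proof
    show "(F has_derivative (\<lambda>h. \<chi> i. Lf i h)) (at z)"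
      by (rule has_derivative_vecI) (simp add: Lf)
    show "(\<chi> i. Lf i (c *s h)) = c *s (\<chi> i. Lf i h)" for c h
      using Lf by (simp add: vec_eq_iff complex_linear_def)
  qed
qed

lemma cholo_compose:
  assumes F: "vholo_on S F" and FT: "\<And>z. z \<in> S \<Longrightarrow> F z \<in> T" and g: "cholo_on T g"
  shows "cholo_on S (\<lambda>z. g (F z))"
proof (rule cholo_onI)
  fix z assume z: "z \<in> S"
  obtain LF where dF: "(F has_derivative LF) (at z)" and cF: "\<And>c h. LF (c *s h) = c *s LF h"
    using vholo_on_has_derivative[OF F z] by blast
  obtain Lg where dg: "(g has_derivative Lg) (at (F z))" and cg: "complex_linear Lg"
    using g FT[OF z] by (metis cholo_onE)
  show "\<exists>L. ((\<lambda>z. g (F z)) has_derivative L) (at z) \<and> complex_linear L"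
    using has_derivative_compose[OF dF dg] cg cF
    by (intro exI[of _ "\<lambda>h. Lg (LF h)"]) (auto simp: complex_linear_def)
qed

lemma vholo_compose:
  assumes "vholo_on S F" "\<And>z. z \<in> S \<Longrightarrow> F z \<in> T" "vholo_on T G"
  shows "vholo_on S (\<lambda>z. G (F z))"
  using assms cholo_compose unfolding vholo_on_def by blast

lemma has_derivative_line:
  fixes v :: "complex^'a::finite"
  shows "((\<lambda>t. p + t *s v) has_derivative (\<lambda>h. h *s v)) (at t)"
proof -
  have "linear (\<lambda>h::complex. h *s v)"
    by (rule linearI) (auto simp: vec_eq_iff algebra_simps)
  then have "bounded_linear (\<lambda>h::complex. h *s v)" by (simp add: linear_conv_bounded_linear)
  then show ?thesis
    using has_derivative_add[OF has_derivative_const[of p] bounded_linear_imp_has_derivative]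
    by simp
qed

lemma holomorphic_on_line:
  fixes g :: "complex^'a::finite \<Rightarrow> complex"
  assumes g: "cholo_on T g" and A: "\<And>t. t \<in> A \<Longrightarrow> p + t *s v \<in> T"
  shows "(\<lambda>t. g (p + t *s v)) holomorphic_on A"
proof -
  have "\<exists>D. ((\<lambda>t. g (p + t *s v)) has_field_derivative D) (at t)" if "t \<in> A" for t
  proof -
    obtain L where dg: "(g has_derivative L) (at (p + t *s v))" and cg: "complex_linear L"
      using g A[OF \<open>t \<in> A\<close>] by (metis cholo_onE)
    have "((\<lambda>t. g (p + t *s v)) has_derivative (\<lambda>h. L (h *s v))) (at t)"
      using has_derivative_compose[OF has_derivative_line dg] .
    moreover have "(\<lambda>h. L (h *s v)) = (*) (L v)"
      using cg by (auto simp: complex_linear_def fun_eq_iff mult.commute)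
    ultimately show ?thesis unfolding has_field_derivative_def by auto
  qed
  then show ?thesis
    unfolding holomorphic_on_def
    using field_differentiable_def field_differentiable_at_within by blast
qed

lemma cholo_on_imp_isCont: "cholo_on S g \<Longrightarrow> z \<in> S \<Longrightarrow> isCont g z"
  by (metis cholo_onE has_derivative_continuous)

lemma vholo_lift: "vholo_on S lift"
  unfolding vholo_on_def
proof
  fix j show "cholo_on S (\<lambda>z. lift z $ j)"
    by (cases j) (simp_all add: cholo_const cholo_nth)
qed

lemma vholo_smult_lift: "vholo_on S (\<lambda>w. c *s lift w)"
  unfolding vholo_on_def
proof
  fix j show "cholo_on S (\<lambda>z. (c *s lift z) $ j)"
    by (cases j) (simp_all add: cholo_const cholo_nth cholo_mult)
qed

definition biholo_pair :: "(complex^'a::finite) set \<Rightarrow> (complex^'a \<Rightarrow> complex^'a) \<Rightarrow> (complex^'a \<Rightarrow> complex^'a) \<Rightarrow> bool" where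
  "biholo_pair S f g \<longleftrightarrow> vholo_on S f \<and> vholo_on S g \<and>
     (\<forall>z\<in>S. f z \<in> S \<and> g z \<in> S \<and> g (f z) = z \<and> f (g z) = z)"

lemma biholo_pair_sym: "biholo_pair S f g \<Longrightarrow> biholo_pair S g f"
  by (auto simp: biholo_pair_def)

lemma biholo_pair_compose:
  assumes "biholo_pair S f g" "biholo_pair S f' g'"
  shows "biholo_pair S (\<lambda>z. f (f' z)) (\<lambda>z. g' (g z))"
  using assms unfolding biholo_pair_def by (auto intro: vholo_compose)

lemma biholo_self_imp_biholo_pair:
  assumes "biholo_self S f"
  shows "biholo_pair S f (inv_into S f)"
proof -
  have bij: "bij_betw f S S" using assms by (simp add: biholo_self_def)
  then have "z \<in> S \<Longrightarrow> inv_into S f z \<in> S" for z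
    by (rule bij_betw_apply[OF bij_betw_inv_into])
  with bij assms show ?thesis
    by (auto simp: biholo_pair_def biholo_self_def bij_betw_apply bij_betw_def f_inv_into_f)
qed

section \<open>Biholomorphisms of the cone descend to the ball\<close>

lemma bounded_holomorphic_punctured_plane_constant:
  assumes hol: "h holomorphic_on -{0}" and bd: "\<And>s. s \<noteq> 0 \<Longrightarrow> norm (h s) \<le> B"
    and "s \<noteq> 0" "t \<noteq> 0"
  shows "h s = h t"
proof -
  have "\<exists>B. eventually (\<lambda>z. norm (h z) \<le> B) (at 0)"
    using bd by (intro exI[of _ B]) (auto simp: eventually_at_filter)
  moreover have "h holomorphic_on UNIV - {0}" using hol by (simp add: Compl_eq_Diff_UNIV)
  ultimately have "\<exists>g. g holomorphic_on UNIV \<and> (\<forall>z\<in>UNIV - {0}. g z = h z)"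
    using holomorphic_on_extend_bounded[of h UNIV 0] by simp
  then obtain g where holg: "g holomorphic_on UNIV" and gh: "\<And>z. z \<in> UNIV - {0} \<Longrightarrow> g z = h z"
    by blast
  have "norm (g z) \<le> max B (cmod (g 0))" for z
    using bd[of z] gh[of z] by (cases "z = 0") auto
  then have "bounded (range g)" unfolding bounded_iff by blast
  then have "g constant_on UNIV" using Liouville_theorem holg by blast
  then have "g s = g t" by (metis constant_on_def UNIV_I)
  then show ?thesis using gh assms(3,4) by simp
qed

text \<open>The ratios \<open>F\<^sub>i/F\<^sub>0\<close> along the punctured line \<open>\<complex>\<^sup>* z \<subseteq> C\<^sup>n\<^sup>,\<^sup>1\<close> are bounded by \<open>1\<close>.\<close>

lemma chart_smult_invariant:
  assumes F: "vholo_on Cn1 F" and FC: "\<And>z. z \<in> Cn1 \<Longrightarrow> F z \<in> Cn1"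
    and z: "z \<in> Cn1" and t: "t \<noteq> 0"
  shows "chart (F (t *s z)) = chart (F z)"
proof -
  have "F (t *s z) $ Some i / F (t *s z) $ None = F (1 *s z) $ Some i / F (1 *s z) $ None" for i
  proof (rule bounded_holomorphic_punctured_plane_constant[where h = "\<lambda>s. F (s *s z) $ Some i / F (s *s z) $ None"])
    have inC: "s \<in> -{0} \<Longrightarrow> 0 + s *s z \<in> Cn1" for s
      using smult_in_Cn1[OF z] by simp
    have "(\<lambda>s. F (0 + s *s z) $ Some i / F (0 + s *s z) $ None) holomorphic_on -{0}"
      using F inC FC Cn1_coord0_nonzero unfolding vholo_on_def
      by (intro holomorphic_on_divide holomorphic_on_line) auto
    then show "(\<lambda>s. F (s *s z) $ Some i / F (s *s z) $ None) holomorphic_on -{0}"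
      by simp
    show "cmod (F (s *s z) $ Some i / F (s *s z) $ None) \<le> 1" if "s \<noteq> 0" for s
      using Cn1_coord_ratio_less[OF FC[OF smult_in_Cn1[OF z that]]] by (simp add: less_imp_le)
  qed (use t in auto)
  then show ?thesis by (simp add: vec_eq_iff)
qed

lemma chart_eq_chart_lift_chart:
  assumes "vholo_on Cn1 F" "\<And>z. z \<in> Cn1 \<Longrightarrow> F z \<in> Cn1" "z \<in> Cn1"
  shows "chart (F z) = chart (F (lift (chart z)))"
proof -
  have "lift (chart z) \<in> Cn1" using chart_in_ball[OF assms(3)] by (simp add: lift_in_Cn1)
  moreover have "z = z $ None *s lift (chart z)"
    using smult_lift_chart Cn1_coord0_nonzero assms(3) by blast
  ultimately show ?thesis
    using chart_smult_invariant[OF assms(1,2)] Cn1_coord0_nonzero[OF assms(3)] by metis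
qed

definition ball_map :: "(complex^('n::finite option) \<Rightarrow> complex^('n option)) \<Rightarrow> complex^'n \<Rightarrow> complex^'n" where
  "ball_map F w = chart (F (lift w))"

lemma chart_comp_eq_ball_map:
  "biholo_pair Cn1 f g \<Longrightarrow> z \<in> Cn1 \<Longrightarrow> chart (f z) = ball_map f (chart z)"
  unfolding ball_map_def biholo_pair_def by (rule chart_eq_chart_lift_chart) auto

lemma cholo_on_comp_lift:
  assumes "vholo_on Cn1 F"
  shows "cholo_on (ball 0 1) (\<lambda>w. F (lift w) $ j)"
  by (rule cholo_compose[OF vholo_lift, where T = Cn1])
    (use assms lift_in_Cn1 in \<open>auto simp: vholo_on_def\<close>)

lemma ball_map_biholo_pair:
  assumes fg: "biholo_pair Cn1 f g"
  shows "biholo_pair (ball 0 1) (ball_map f) (ball_map g)"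
proof -
  have holo: "vholo_on (ball 0 1) (ball_map F)" if "biholo_pair Cn1 F G" for F G
    unfolding vholo_on_def
  proof
    fix i
    have "cholo_on (ball 0 1) (\<lambda>w. F (lift w) $ j)" for j
      using that cholo_on_comp_lift by (auto simp: biholo_pair_def)
    moreover have "w \<in> ball 0 1 \<Longrightarrow> F (lift w) $ None \<noteq> 0" for w
      using that lift_in_Cn1 Cn1_coord0_nonzero by (auto simp: biholo_pair_def)
    ultimately show "cholo_on (ball 0 1) (\<lambda>w. ball_map F w $ i)"
      unfolding ball_map_def chart_nth by (intro cholo_divide)
  qed
  have inv: "ball_map G (ball_map F w) = w" "ball_map F w \<in> ball 0 1"
    if "biholo_pair Cn1 F G" "w \<in> ball 0 1" for F G w
  proof -
    have w: "lift w \<in> Cn1" using that(2) by (simp add: lift_in_Cn1)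
    then have "F (lift w) \<in> Cn1" using that(1) by (simp add: biholo_pair_def)
    then show "ball_map F w \<in> ball 0 1" unfolding ball_map_def by (rule chart_in_ball)
    have "ball_map G (ball_map F w) = chart (G (F (lift w)))"
      unfolding ball_map_def
      using chart_comp_eq_ball_map[OF biholo_pair_sym[OF that(1)] \<open>F (lift w) \<in> Cn1\<close>]
      by (simp add: ball_map_def)
    also have "\<dots> = w" using that(1) w by (simp add: biholo_pair_def)
    finally show "ball_map G (ball_map F w) = w" .
  qed
  show ?thesis
    using holo[OF fg] holo[OF biholo_pair_sym[OF fg]] inv[OF fg] inv[OF biholo_pair_sym[OF fg]]
    by (simp add: biholo_pair_def)
qed

section \<open>The group \<open>U(n,1)\<close> and its action on the ball\<close>

lemma Jn1_nth: "(Jn1 :: complex^('n::finite option)^('n option)) $ x $ y =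
    (if x = y then (if x = None then -1 else 1) else 0)"
  by (simp add: Jn1_def)

lemma conj_transpose_Jn1_mult_nth:
  fixes A B :: "complex^('n::finite option)^('n option)"
  shows "(conj_transpose A ** Jn1 ** B) $ x $ y =
    - cnj (A$None$x) * B$None$y + (\<Sum>i\<in>UNIV. cnj (A$Some i$x) * B$Some i$y)"
proof -
  have "(conj_transpose A ** Jn1) $ x $ l = cnj (A$l$x) * (if l = None then -1 else 1)" for l
    by (simp add: matrix_matrix_mult_def conj_transpose_def Jn1_nth if_distrib[of "\<lambda>v. _ * v"]
        sum.delta' cong: if_cong)
  then show ?thesis
    by (simp add: matrix_matrix_mult_def sum_option_UNIV)
qed

lemma conj_transpose_Jn1_mult_cnj:
  fixes M :: "complex^('n::finite option)^('n option)"
  shows "(conj_transpose M ** Jn1 ** M) $ y $ x = cnj ((conj_transpose M ** Jn1 ** M) $ x $ y)"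
  by (simp add: conj_transpose_Jn1_mult_nth cnj_sum mult.commute)

lemma conj_transpose_mult:
  "conj_transpose (A ** B) = conj_transpose B ** conj_transpose (A :: complex^'a::finite^'a)"
  by (simp add: conj_transpose_def matrix_matrix_mult_def vec_eq_iff cnj_sum mult.commute)

lemma conj_transpose_conj_transpose [simp]:
  "conj_transpose (conj_transpose A) = (A :: complex^'a::finite^'a)"
  by (simp add: conj_transpose_def vec_eq_iff)

lemma conj_transpose_mat1: "conj_transpose (mat 1 :: complex^'a::finite^'a) = mat 1"
  by (simp add: conj_transpose_def mat_def vec_eq_iff)

lemma conj_transpose_Jn1: "conj_transpose (Jn1 :: complex^('n::finite option)^('n option)) = Jn1"
  by (simp add: conj_transpose_def Jn1_def vec_eq_iff)

lemma Jn1_mult_Jn1: "(Jn1 :: complex^('n::finite option)^('n option)) ** Jn1 = mat 1"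
  by (simp add: matrix_matrix_mult_def Jn1_nth mat_def vec_eq_iff if_distrib[of "\<lambda>v. _ * v"]
      sum.delta cong: if_cong)

definition herm_form :: "complex^('n::finite option)^('n option) \<Rightarrow> complex^('n option) \<Rightarrow> complex" where
  "herm_form B z = (\<Sum>x\<in>UNIV. \<Sum>y\<in>UNIV. cnj (z$x) * B$x$y * z$y)"

lemma of_real_cmod_power2: "complex_of_real ((cmod w)\<^sup>2) = cnj w * w"
  by (metis complex_norm_square mult.commute)

lemma sum_sum_product_expand:
  fixes a b :: "'x::finite \<Rightarrow> complex" and c d :: "'i::finite \<Rightarrow> 'x \<Rightarrow> complex"
  shows "(\<Sum>x\<in>UNIV. \<Sum>y\<in>UNIV. - (a x * b y) + (\<Sum>i\<in>UNIV. c i x * d i y)) =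
    - ((\<Sum>x\<in>UNIV. a x) * (\<Sum>y\<in>UNIV. b y)) + (\<Sum>i\<in>UNIV. (\<Sum>x\<in>UNIV. c i x) * (\<Sum>y\<in>UNIV. d i y))"
proof -
  have "(\<Sum>i\<in>UNIV. (\<Sum>x\<in>UNIV. c i x) * (\<Sum>y\<in>UNIV. d i y)) =
      (\<Sum>i\<in>UNIV. \<Sum>x\<in>UNIV. \<Sum>y\<in>UNIV. c i x * d i y)"
    by (simp add: sum_product)
  also have "\<dots> = (\<Sum>x\<in>UNIV. \<Sum>i\<in>UNIV. \<Sum>y\<in>UNIV. c i x * d i y)"
    by (rule sum.swap)
  also have "\<dots> = (\<Sum>x\<in>UNIV. \<Sum>y\<in>UNIV. \<Sum>i\<in>UNIV. c i x * d i y)"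
    by (rule sum.cong[OF refl], rule sum.swap)
  finally have cd: "(\<Sum>i\<in>UNIV. (\<Sum>x\<in>UNIV. c i x) * (\<Sum>y\<in>UNIV. d i y)) =
      (\<Sum>x\<in>UNIV. \<Sum>y\<in>UNIV. \<Sum>i\<in>UNIV. c i x * d i y)" .
  have ab: "(\<Sum>x\<in>UNIV. a x) * (\<Sum>y\<in>UNIV. b y) = (\<Sum>x\<in>UNIV. \<Sum>y\<in>UNIV. a x * b y)"
    by (simp add: sum_product)
  show ?thesis unfolding cd ab by (simp add: sum.distrib sum_negf sum_subtractf)
qed

lemma herm_form_conj_transpose_Jn1_mult:
  fixes A :: "complex^('n::finite option)^('n option)"
  shows "herm_form (conj_transpose A ** Jn1 ** A) z = of_real (hform (A *v z))"
proof -
  have "herm_form (conj_transpose A ** Jn1 ** A) z =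
     (\<Sum>x\<in>UNIV. \<Sum>y\<in>UNIV. - (cnj (A$None$x * z$x) * (A$None$y * z$y))
        + (\<Sum>i\<in>UNIV. cnj (A$Some i$x * z$x) * (A$Some i$y * z$y)))"
    unfolding herm_form_def conj_transpose_Jn1_mult_nth
    by (intro sum.cong refl) (simp add: algebra_simps sum_distrib_left sum_distrib_right)
  also have "\<dots> = - (cnj (\<Sum>x\<in>UNIV. A$None$x * z$x) * (\<Sum>y\<in>UNIV. A$None$y * z$y))
        + (\<Sum>i\<in>UNIV. cnj (\<Sum>x\<in>UNIV. A$Some i$x * z$x) * (\<Sum>y\<in>UNIV. A$Some i$y * z$y))"
    unfolding cnj_sum by (rule sum_sum_product_expand)
  also have "\<dots> = - (cnj ((A *v z)$None) * (A *v z)$None)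
        + (\<Sum>i\<in>UNIV. cnj ((A *v z)$Some i) * (A *v z)$Some i)"
    by (simp only: matrix_vector_mult_def vec_lambda_beta)
  also have "\<dots> = of_real (hform (A *v z))"
    unfolding hform_def of_real_add of_real_minus of_real_sum of_real_cmod_power2 ..
  finally show ?thesis .
qed

lemma hform_U_n1_mult: "M \<in> U_n1 \<Longrightarrow> hform (M *v z) = hform z"
  using herm_form_conj_transpose_Jn1_mult[of M z] herm_form_conj_transpose_Jn1_mult[of "mat 1" z]
  by (simp add: U_n1_def conj_transpose_mat1)

lemma U_n1_mult_in_Cn1: "M \<in> U_n1 \<Longrightarrow> z \<in> Cn1 \<Longrightarrow> M *v z \<in> Cn1"
  by (simp add: Cn1_iff_hform hform_U_n1_mult)

lemma U_n1_mult:
  assumes "M \<in> U_n1" "N \<in> U_n1"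
  shows "M ** N \<in> U_n1"
proof -
  have "conj_transpose (M ** N) ** Jn1 ** (M ** N) =
      conj_transpose N ** (conj_transpose M ** Jn1 ** M) ** N"
    by (simp add: conj_transpose_mult matrix_mul_assoc)
  then show ?thesis using assms unfolding U_n1_def by simp
qed

definition U_inverse :: "complex^('n::finite option)^('n option) \<Rightarrow> complex^('n option)^('n option)" where
  "U_inverse M = Jn1 ** conj_transpose M ** Jn1"

lemma U_inverse_mult: "M \<in> U_n1 \<Longrightarrow> U_inverse M ** M = mat 1"
  unfolding U_inverse_def U_n1_def by (simp add: matrix_mul_assoc[symmetric] Jn1_mult_Jn1)

lemma mult_U_inverse: "M \<in> U_n1 \<Longrightarrow> M ** U_inverse M = mat 1"
  using U_inverse_mult matrix_left_right_inverse by blast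

lemma U_inverse_in_U_n1:
  assumes M: "M \<in> U_n1"
  shows "U_inverse M \<in> U_n1"
proof -
  have JJ: "Jn1 ** (Jn1 ** X) = X" for X :: "complex^('n::finite option)^('n option)"
    by (metis Jn1_mult_Jn1 matrix_mul_assoc matrix_mul_lid)
  have "M ** Jn1 ** conj_transpose M ** Jn1 = mat 1"
    using mult_U_inverse[OF M] by (simp add: U_inverse_def matrix_mul_assoc)
  then have "M ** Jn1 ** conj_transpose M = Jn1"
    by (metis Jn1_mult_Jn1 matrix_mul_assoc matrix_mul_lid matrix_mul_rid)
  then have e: "M ** (Jn1 ** (conj_transpose M ** X)) = Jn1 ** X" for X
    by (metis matrix_mul_assoc)
  show ?thesis
    unfolding U_n1_def U_inverse_def
    by (simp add: conj_transpose_mult conj_transpose_Jn1 matrix_mul_assoc[symmetric] JJ e)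
qed

lemma U_n1_imp_PU_rep: "A \<in> U_n1 \<Longrightarrow> PU_rep A"
  unfolding PU_rep_def by (intro exI[of _ 1] exI[of _ A]) (simp add: vec_eq_iff)

definition moebius_map :: "complex^('n::finite option)^('n option) \<Rightarrow> complex^'n \<Rightarrow> complex^'n" where
  "moebius_map M w = chart (M *v lift w)"

lemma chart_mult_vec: "z $ None \<noteq> 0 \<Longrightarrow> chart (A *v z) = moebius_map A (chart z)"
  unfolding moebius_map_def
  by (subst smult_lift_chart, assumption) (simp add: vector_scalar_commute chart_smult)

lemma moebius_map_in_ball: "M \<in> U_n1 \<Longrightarrow> norm w < 1 \<Longrightarrow> norm (moebius_map M w) < 1"
  unfolding moebius_map_def using chart_in_ball U_n1_mult_in_Cn1 lift_in_Cn1 by fastforce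

lemma moebius_map_mat1 [simp]: "moebius_map (mat 1) w = w"
  by (simp add: moebius_map_def)

lemma moebius_map_comp:
  assumes "N \<in> U_n1" "norm w < 1"
  shows "moebius_map M (moebius_map N w) = moebius_map (M ** N) w"
proof -
  have "(N *v lift w) $ None \<noteq> 0"
    using assms U_n1_mult_in_Cn1 lift_in_Cn1 Cn1_coord0_nonzero by blast
  then have "moebius_map M (moebius_map N w) = chart (M *v (N *v lift w))"
    unfolding moebius_map_def[of N] by (simp add: chart_mult_vec)
  then show ?thesis by (simp add: moebius_map_def matrix_vector_mul_assoc)
qed

lemma vholo_moebius_map: "M \<in> U_n1 \<Longrightarrow> vholo_on (ball 0 1) (moebius_map M)"
  unfolding vholo_on_def
proof
  fix i assume M: "M \<in> U_n1"
  have "cholo_on (ball 0 1) (\<lambda>w. (M *v lift w) $ k)" for k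
    unfolding matrix_vector_mult_def
    by (simp, rule cholo_sum, simp, rule cholo_mult[OF cholo_const],
        rule cholo_compose[OF vholo_lift _ cholo_nth, where T=UNIV], simp)
  moreover have "w \<in> ball 0 1 \<Longrightarrow> (M *v lift w) $ None \<noteq> 0" for w
    using U_n1_mult_in_Cn1[OF M] lift_in_Cn1 Cn1_coord0_nonzero by fastforce
  ultimately show "cholo_on (ball 0 1) (\<lambda>w. moebius_map M w $ i)"
    unfolding moebius_map_def chart_nth by (intro cholo_divide)
qed

lemma moebius_map_biholo_pair:
  assumes M: "M \<in> U_n1"
  shows "biholo_pair (ball 0 1) (moebius_map M) (moebius_map (U_inverse M))"
  using vholo_moebius_map[OF M] vholo_moebius_map[OF U_inverse_in_U_n1[OF M]]
    moebius_map_in_ball[OF M] moebius_map_in_ball[OF U_inverse_in_U_n1[OF M]]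
    moebius_map_comp[OF M] moebius_map_comp[OF U_inverse_in_U_n1[OF M]]
    U_inverse_mult[OF M] mult_U_inverse[OF M]
  by (simp add: biholo_pair_def)

text \<open>The boost of velocity \<open>b\<close>, with Lorentz factor \<open>\<gamma> = (1 - |b|\<^sup>2)\<^sup>-\<^sup>1\<^sup>/\<^sup>2\<close>:
  \<open>[[\<gamma>, \<gamma> b\<^sup>*], [\<gamma> b, I + \<kappa> b b\<^sup>*]]\<close> with \<open>\<kappa> = \<gamma>\<^sup>2/(1 + \<gamma>)\<close>.\<close>

definition boost_gamma :: "complex^'n::finite \<Rightarrow> real" where
  "boost_gamma b = 1 / sqrt (1 - (norm b)\<^sup>2)"

definition boost_kappa :: "complex^'n::finite \<Rightarrow> real" where
  "boost_kappa b = (boost_gamma b)\<^sup>2 / (1 + boost_gamma b)"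

definition boost :: "complex^'n::finite \<Rightarrow> complex^('n option)^('n option)" where
  "boost b = (\<chi> x y. case x of
      None \<Rightarrow> (case y of None \<Rightarrow> of_real (boost_gamma b) | Some j \<Rightarrow> of_real (boost_gamma b) * cnj (b$j))
    | Some i \<Rightarrow> (case y of None \<Rightarrow> of_real (boost_gamma b) * b$i
        | Some j \<Rightarrow> (if i = j then 1 else 0) + of_real (boost_kappa b) * b$i * cnj (b$j)))"

lemma boost_nth:
  "boost b $ None $ None = of_real (boost_gamma b)"
  "boost b $ None $ Some j = of_real (boost_gamma b) * cnj (b$j)"
  "boost b $ Some i $ None = of_real (boost_gamma b) * b$i"
  "boost b $ Some i $ Some j = (if i = j then 1 else 0) + of_real (boost_kappa b) * b$i * cnj (b$j)"
  by (simp_all add: boost_def)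

lemma boost_gamma_kappa:
  fixes b :: "complex^'n::finite"
  defines "g \<equiv> complex_of_real (boost_gamma b)" and "k \<equiv> complex_of_real (boost_kappa b)"
    and "S \<equiv> complex_of_real ((norm b)\<^sup>2)"
  assumes "norm b < 1"
  shows "g * g * (1 - S) = 1" "k * S = g - 1" "k * (2 + k * S) = g * g" "boost_gamma b > 0"
proof -
  have p: "1 - (norm b)\<^sup>2 > 0" using assms by (simp add: power_less_one_iff)
  then have e1: "boost_gamma b * boost_gamma b * (1 - (norm b)\<^sup>2) = 1"
    by (simp add: boost_gamma_def real_sqrt_mult[symmetric] field_simps)
  then show "g * g * (1 - S) = 1"
    unfolding g_def S_def by (metis of_real_1 of_real_diff of_real_mult)
  show pos: "boost_gamma b > 0" using p by (simp add: boost_gamma_def)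
  have "boost_gamma b * boost_gamma b * (1 - (norm b)\<^sup>2) =
      boost_gamma b * boost_gamma b - boost_gamma b * boost_gamma b * (norm b)\<^sup>2"
    by (simp only: right_diff_distrib mult_1_right)
  then have "boost_gamma b * boost_gamma b * (norm b)\<^sup>2 = boost_gamma b * boost_gamma b - 1"
    using e1 by linarith
  moreover have "boost_kappa b * (norm b)\<^sup>2 =
      boost_gamma b * boost_gamma b * (norm b)\<^sup>2 / (1 + boost_gamma b)"
    by (simp add: boost_kappa_def power2_eq_square)
  ultimately have "boost_kappa b * (norm b)\<^sup>2 = (boost_gamma b * boost_gamma b - 1) / (1 + boost_gamma b)"
    by (simp only:)
  also have "\<dots> = boost_gamma b - 1"
    using pos by (simp add: field_simps power2_eq_square)
  finally have "boost_kappa b * (norm b)\<^sup>2 = boost_gamma b - 1" .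
  then show kS: "k * S = g - 1"
    unfolding k_def S_def g_def by (metis of_real_1 of_real_diff of_real_mult)
  have "k * (1 + g) = g * g"
    unfolding k_def g_def using pos
    by (simp add: boost_kappa_def field_simps power2_eq_square flip: of_real_mult of_real_add)
  then show "k * (2 + k * S) = g * g" by (simp add: kS)
qed

lemma sum_cnj_mult_self: "(\<Sum>i\<in>UNIV. cnj (b$i) * b$i) = of_real ((norm (b::complex^'n::finite))\<^sup>2)"
  unfolding norm_vec_power2 of_real_sum of_real_cmod_power2 ..

lemma sum_delta_delta_scaled:
  fixes u v w :: "'a::finite \<Rightarrow> complex"
  shows "(\<Sum>k\<in>UNIV. (if k = i then u k else 0) + (if k = j then v k else 0) + c * w k) =
    u i + v j + c * (\<Sum>k\<in>UNIV. w k)"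
  by (simp add: sum.distrib sum_distrib_left sum.delta)

lemma boost_J_None_None:
  assumes "norm b < 1"
  shows "(conj_transpose (boost b) ** Jn1 ** boost b) $ None $ None = -1"
proof -
  define g where "g = complex_of_real (boost_gamma b)"
  define S where "S = complex_of_real ((norm b)\<^sup>2)"
  have "(conj_transpose (boost b) ** Jn1 ** boost b) $ None $ None =
      - (g * g) + (\<Sum>i\<in>UNIV. (g*g) * (cnj (b$i) * b$i))"
    by (simp add: conj_transpose_Jn1_mult_nth boost_nth g_def algebra_simps)
  also have "\<dots> = - (g * g * (1 - S))"
    by (simp only: sum_distrib_left[symmetric] sum_cnj_mult_self S_def) (simp add: algebra_simps)
  also have "\<dots> = -1"
    using boost_gamma_kappa(1)[OF assms] by (simp add: g_def S_def)
  finally show ?thesis .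
qed

lemma boost_J_None_Some:
  assumes "norm b < 1"
  shows "(conj_transpose (boost b) ** Jn1 ** boost b) $ None $ Some j = 0"
proof -
  define g where "g = complex_of_real (boost_gamma b)"
  define k where "k = complex_of_real (boost_kappa b)"
  define S where "S = complex_of_real ((norm b)\<^sup>2)"
  have "(\<Sum>i\<in>UNIV. cnj (g * b$i) * ((if i = j then 1 else 0) + k * b$i * cnj (b$j)))
      = (\<Sum>i\<in>UNIV. (if i = j then g * cnj (b$i) else 0) + (if i = j then 0 else 0)
          + (g * k * cnj (b$j)) * (cnj (b$i) * b$i))"
    by (rule sum.cong) (simp_all add: g_def k_def algebra_simps)
  also have "\<dots> = g * cnj (b$j) + g * k * cnj (b$j) * S"
    by (simp only: sum_delta_delta_scaled sum_cnj_mult_self S_def) simp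
  finally have e: "(\<Sum>i\<in>UNIV. cnj (g * b$i) * ((if i = j then 1 else 0) + k * b$i * cnj (b$j))) =
      g * cnj (b$j) + g * k * cnj (b$j) * S" .
  have "- (g * (g * cnj (b$j))) + (g * cnj (b$j) + g * k * cnj (b$j) * S) =
      g * cnj (b$j) * (k * S - (g - 1))"
    by (simp add: algebra_simps)
  also have "\<dots> = 0"
    using boost_gamma_kappa(2)[OF assms] by (simp add: g_def k_def S_def)
  finally show ?thesis
    using e by (simp add: conj_transpose_Jn1_mult_nth boost_nth g_def[symmetric] k_def[symmetric])
      (simp add: g_def)
qed

lemma boost_J_Some_Some:
  assumes "norm b < 1"
  shows "(conj_transpose (boost b) ** Jn1 ** boost b) $ Some i $ Some j = (if i = j then 1 else 0)"
proof -
  define g where "g = complex_of_real (boost_gamma b)"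
  define k where "k = complex_of_real (boost_kappa b)"
  define S where "S = complex_of_real ((norm b)\<^sup>2)"
  have "(\<Sum>l\<in>UNIV. cnj ((if l = i then 1 else 0) + k * b$l * cnj (b$i)) *
          ((if l = j then 1 else 0) + k * b$l * cnj (b$j)))
      = (\<Sum>l\<in>UNIV. (if l = i then (if l = j then 1 else 0) + k * b$l * cnj (b$j) else 0)
          + (if l = j then k * cnj (b$l) * b$i else 0) + (k * k * b$i * cnj (b$j)) * (cnj (b$l) * b$l))"
    by (rule sum.cong) (simp_all add: k_def algebra_simps)
  also have "\<dots> = (if i = j then 1 else 0) + k * b$i * cnj (b$j) + k * cnj (b$j) * b$i
      + k * k * b$i * cnj (b$j) * S"
    by (simp only: sum_delta_delta_scaled sum_cnj_mult_self S_def)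
  finally have e: "(\<Sum>l\<in>UNIV. cnj ((if l = i then 1 else 0) + k * b$l * cnj (b$i)) *
          ((if l = j then 1 else 0) + k * b$l * cnj (b$j)))
      = (if i = j then 1 else 0) + k * b$i * cnj (b$j) + k * cnj (b$j) * b$i
      + k * k * b$i * cnj (b$j) * S" .
  have "- (cnj (g * cnj (b$i)) * (g * cnj (b$j)))
      + (k * b$i * cnj (b$j) + k * cnj (b$j) * b$i + k * k * b$i * cnj (b$j) * S)
      = b$i * cnj (b$j) * (k * (2 + k * S) - g * g)"
    by (simp add: g_def algebra_simps)
  also have "\<dots> = 0"
    using boost_gamma_kappa(3)[OF assms] by (simp add: g_def k_def S_def)
  finally show ?thesis
    using e by (simp add: conj_transpose_Jn1_mult_nth boost_nth g_def[symmetric] k_def[symmetric]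
        algebra_simps)
qed

lemma boost_in_U_n1:
  assumes "norm b < 1"
  shows "boost b \<in> U_n1"
proof -
  have "(conj_transpose (boost b) ** Jn1 ** boost b) $ x $ y = Jn1 $ x $ y" for x y
    using boost_J_None_None[OF assms] boost_J_None_Some[OF assms] boost_J_Some_Some[OF assms]
      conj_transpose_Jn1_mult_cnj[of "boost b" "Some _" None]
    by (cases x; cases y) (auto simp: Jn1_nth)
  then show ?thesis by (simp add: U_n1_def vec_eq_iff)
qed

lemma moebius_map_boost_0: "norm b < 1 \<Longrightarrow> moebius_map (boost b) 0 = b"
  using boost_gamma_kappa(4)[of b]
  by (simp add: moebius_map_def vec_eq_iff matrix_vector_mult_def sum_option_UNIV boost_def lift_def)

section \<open>Schwarz's lemma in the ball\<close>

definition cinner :: "complex^'n::finite \<Rightarrow> complex^'n \<Rightarrow> complex" where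
  "cinner x y = (\<Sum>i\<in>UNIV. x$i * cnj (y$i))"

lemma cinner_self: "cinner x x = of_real ((norm x)\<^sup>2)"
  unfolding cinner_def norm_vec_power2 of_real_sum of_real_cmod_power2 by (simp add: mult.commute)

lemma cinner_commute: "cinner y x = cnj (cinner x y)"
  by (simp add: cinner_def cnj_sum mult.commute)

lemma cinner_add_left: "cinner (x + y) z = cinner x z + cinner y z"
  by (simp add: cinner_def algebra_simps sum.distrib)

lemma cinner_add_right: "cinner x (y + z) = cinner x y + cinner x z"
  by (simp add: cinner_def algebra_simps sum.distrib)

lemma cinner_diff_left: "cinner (x - y) z = cinner x z - cinner y z"
  by (simp add: cinner_def algebra_simps sum_subtractf)

lemma cinner_diff_right: "cinner x (y - z) = cinner x y - cinner x z"
  by (simp add: cinner_def algebra_simps sum_subtractf)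

lemma cinner_smult_left: "cinner (c *s x) y = c * cinner x y"
  by (simp add: cinner_def sum_distrib_left algebra_simps)

lemma cinner_smult_right: "cinner x (c *s y) = cnj c * cinner x y"
  by (simp add: cinner_def sum_distrib_left algebra_simps)

lemma cinner_axis: "cinner (axis b 1) (axis a (1::complex)) = (if a = b then 1 else 0)"
  by (simp add: cinner_def axis_def if_distrib[of "\<lambda>v. v * _"] sum.delta cong: if_cong)

lemma norm_cinner_le: "cmod (cinner x y) \<le> norm x * norm y"
proof -
  have "cmod (cinner x y) \<le> (\<Sum>i\<in>UNIV. \<bar>cmod (x$i)\<bar> * \<bar>cmod (y$i)\<bar>)"
    unfolding cinner_def by (rule order_trans[OF norm_sum]) (simp add: norm_mult)
  also have "\<dots> \<le> L2_set (\<lambda>i. cmod (x$i)) UNIV * L2_set (\<lambda>i. cmod (y$i)) UNIV"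
    by (rule L2_set_mult_ineq)
  finally show ?thesis by (simp add: norm_vec_def)
qed

text \<open>Equality in Cauchy-Schwarz: \<open>|x - c e|\<^sup>2 = |x|\<^sup>2 - |c|\<^sup>2\<close> when \<open>\<langle>x, e\<rangle> = c\<close> and \<open>|e| = 1\<close>.\<close>

lemma eq_smult_if_cinner_eq_norm:
  assumes e: "norm e = 1" and x: "norm x = cmod c" and c: "cinner x e = c"
  shows "x = c *s e"
proof -
  have "cinner (x - c *s e) (x - c *s e) =
      cinner x x - cnj c * cinner x e - c * cinner e x + c * cnj c * cinner e e"
    by (simp add: cinner_diff_left cinner_diff_right cinner_smult_left cinner_smult_right algebra_simps)
  also have "\<dots> = 0"
    using e x c by (simp add: cinner_self cinner_commute[of e x] of_real_cmod_power2[simplified] algebra_simps)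
  finally have "(norm (x - c *s e))\<^sup>2 = 0" by (simp add: cinner_self)
  then show ?thesis by simp
qed

lemma norm_add_power2_cinner: "(norm (x + y))\<^sup>2 = (norm x)\<^sup>2 + (norm y)\<^sup>2 + 2 * Re (cinner x y)"
proof -
  have "complex_of_real ((norm (x + y))\<^sup>2) = cinner (x + y) (x + y)"
    by (simp only: cinner_self)
  also have "\<dots> = cinner x x + cinner y y + (cinner x y + cnj (cinner x y))"
    by (simp add: cinner_add_left cinner_add_right cinner_commute[of y x])
  also have "\<dots> = of_real ((norm x)\<^sup>2 + (norm y)\<^sup>2 + 2 * Re (cinner x y))"
    by (simp add: cinner_self complex_add_cnj)
  finally show ?thesis using of_real_eq_iff by blast
qed

lemma cinner_eq_if_norms_eq:
  assumes "norm (x + y) = norm (x' + y')" "norm (x + \<i> *s y) = norm (x' + \<i> *s y')"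
    "norm x = norm x'" "norm y = norm y'"
  shows "cinner x y = cinner x' y'"
proof -
  have "Re (cinner x y) = Re (cinner x' y')"
    using assms(1,3,4) norm_add_power2_cinner[of x y] norm_add_power2_cinner[of x' y'] by simp
  moreover have "Re (cinner x (\<i> *s y)) = Re (cinner x' (\<i> *s y'))"
    using assms(2,3,4) norm_add_power2_cinner[of x "\<i> *s y"] norm_add_power2_cinner[of x' "\<i> *s y'"]
    by (simp add: norm_smult_vec)
  then have "Im (cinner x y) = Im (cinner x' y')" by (simp add: cinner_smult_right)
  ultimately show ?thesis by (simp add: complex_eq_iff)
qed

text \<open>Restricting a self-map of the ball fixing \<open>0\<close> to the disc through a unit vector \<open>u\<close> and
  pairing with a vector \<open>e\<close> of norm at most \<open>1\<close> gives a self-map of the unit disc fixing \<open>0\<close>,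
  to which the one-variable Schwarz lemma applies.\<close>

lemma ball_self_map_slice:
  fixes g :: "complex^'n::finite \<Rightarrow> complex^'n"
  assumes hol: "vholo_on (ball 0 1) g" and into: "\<And>w. norm w < 1 \<Longrightarrow> norm (g w) < 1"
    and g0: "g 0 = 0" and u: "norm u = 1" and e: "norm e \<le> 1"
  shows "(\<lambda>z. cinner (g (z *s u)) e) holomorphic_on ball 0 1" "cinner (g (0 *s u)) e = 0"
    "\<And>z. norm z < 1 \<Longrightarrow> norm (cinner (g (z *s u)) e) < 1"
proof -
  have "z \<in> ball 0 1 \<Longrightarrow> 0 + z *s u \<in> ball 0 1" for z
    using u by (simp add: norm_smult_vec)
  then have "(\<lambda>z. \<Sum>i\<in>UNIV. g (0 + z *s u) $ i * cnj (e$i)) holomorphic_on ball 0 1"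
    using hol unfolding vholo_on_def
    by (intro holomorphic_on_sum holomorphic_on_mult holomorphic_on_const holomorphic_on_line) auto
  then show "(\<lambda>z. cinner (g (z *s u)) e) holomorphic_on ball 0 1" by (simp add: cinner_def)
  show "cinner (g (0 *s u)) e = 0" using g0 by (simp add: cinner_def)
  fix z :: complex assume z: "norm z < 1"
  have "norm (cinner (g (z *s u)) e) \<le> norm (g (z *s u)) * norm e" by (rule norm_cinner_le)
  also have "\<dots> \<le> norm (g (z *s u))" using e by (simp add: mult_left_le)
  also have "\<dots> < 1" using into z u by (simp add: norm_smult_vec)
  finally show "norm (cinner (g (z *s u)) e) < 1" .
qed

lemma ball_self_map_norm_le:
  fixes g :: "complex^'n::finite \<Rightarrow> complex^'n"
  assumes hol: "vholo_on (ball 0 1) g" and into: "\<And>w. norm w < 1 \<Longrightarrow> norm (g w) < 1"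
    and g0: "g 0 = 0" and w: "norm w < 1"
  shows "norm (g w) \<le> norm w"
proof (cases "g w = 0")
  case False
  then have "w \<noteq> 0" using g0 by auto
  define u where "u = complex_of_real (inverse (norm w)) *s w"
  define e where "e = complex_of_real (inverse (norm (g w))) *s g w"
  define z where "z = complex_of_real (norm w)"
  have u: "norm u = 1" using \<open>w \<noteq> 0\<close> by (simp add: u_def norm_smult_vec norm_inverse)
  have e: "norm e \<le> 1" using False by (simp add: e_def norm_smult_vec norm_inverse)
  have zu: "z *s u = w" using \<open>w \<noteq> 0\<close> by (simp add: z_def u_def vec_eq_iff)
  have "norm z < 1" using w by (simp add: z_def)
  then have "norm (cinner (g (z *s u)) e) \<le> norm z"
    using Schwarz_Lemma(1)[OF ball_self_map_slice[OF hol into g0 u e]] by blast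
  moreover have "cinner (g (z *s u)) e = of_real (norm (g w))"
    using False by (simp add: zu e_def cinner_smult_right cinner_self power2_eq_square)
  ultimately show ?thesis by (simp add: z_def)
qed simp

text \<open>On the disc through a unit vector \<open>u\<close> the equality case of Schwarz's lemma makes \<open>g\<close>
  linear, \<open>g (z u) = z e\<close>; differentiating at \<open>0\<close> identifies \<open>e\<close> with \<open>L u\<close>.\<close>

lemma ball_isometry_on_line:
  fixes g :: "complex^'n::finite \<Rightarrow> complex^'n"
  assumes hol: "vholo_on (ball 0 1) g" and into: "\<And>w. norm w < 1 \<Longrightarrow> norm (g w) < 1"
    and g0: "g 0 = 0" and iso: "\<And>w. norm w < 1 \<Longrightarrow> norm (g w) = norm w"
    and dg: "(g has_derivative L) (at 0)" and u: "norm u = 1" and z: "cmod z < 1"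
  shows "g (z *s u) = z *s L u"
proof -
  define e where "e = (2::complex) *s g ((1/2 :: complex) *s u)"
  have ng: "norm (g ((1/2 :: complex) *s u)) = 1/2" using iso u by (simp add: norm_smult_vec)
  then have e: "norm e = 1" by (simp add: e_def norm_smult_vec)
  let ?k = "\<lambda>z. cinner (g (z *s u)) e"
  have "?k (1/2) = 2 * of_real ((norm (g ((1/2 :: complex) *s u)))\<^sup>2)"
    by (simp add: e_def cinner_smult_right cinner_self)
  also have "\<dots> = 1/2" by (simp add: ng power2_eq_square)
  finally have k12: "?k (1/2) = 1/2" .
  then have "norm (?k (1/2)) = norm (1/2 :: complex)" by (simp only:)
  then have "\<exists>z. norm z < 1 \<and> z \<noteq> 0 \<and> norm (?k z) = norm z" by (intro exI[of _ "1/2"]) simp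
  then obtain \<alpha> where \<alpha>: "\<And>z. norm z < 1 \<Longrightarrow> ?k z = \<alpha> * z"
    using Schwarz_Lemma(3)[OF ball_self_map_slice[OF hol into g0 u], of e] e by auto
  then have "\<alpha> = 1" using k12 \<alpha>[of "1/2"] by simp
  have ge: "g (z *s u) = z *s e" if "cmod z < 1" for z
  proof -
    have "norm (g (z *s u)) = cmod z" using iso that u by (simp add: norm_smult_vec)
    then show ?thesis using eq_smult_if_cinner_eq_norm[OF e] \<alpha>[OF that] \<open>\<alpha> = 1\<close> by simp
  qed
  have "((\<lambda>t. g (0 + t *s u)) has_derivative (\<lambda>h. L (h *s u))) (at 0)"
    using has_derivative_compose[OF has_derivative_line[of 0 u 0], of g L] dg by simp
  moreover have "((\<lambda>t. 0 + t *s e) has_derivative (\<lambda>h. h *s e)) (at 0)"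
    by (rule has_derivative_line)
  then have "((\<lambda>t. g (0 + t *s u)) has_derivative (\<lambda>h. h *s e)) (at 0)"
    by (rule has_derivative_transform_within_open[of _ _ _ _ "ball 0 1"]) (auto simp: ge)
  ultimately have "(\<lambda>h. L (h *s u)) = (\<lambda>h. h *s e)" by (rule has_derivative_unique)
  then have "L u = e" by (metis vector_smult_lid)
  then show ?thesis using ge z by simp
qed

lemma ball_isometry_linear:
  fixes g :: "complex^'n::finite \<Rightarrow> complex^'n"
  assumes hol: "vholo_on (ball 0 1) g" and into: "\<And>w. norm w < 1 \<Longrightarrow> norm (g w) < 1"
    and g0: "g 0 = 0" and iso: "\<And>w. norm w < 1 \<Longrightarrow> norm (g w) = norm w"
  obtains L where "\<And>w. norm w < 1 \<Longrightarrow> g w = L w" "\<And>c h. L (c *s h) = c *s L h" "linear L"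
proof -
  obtain L where dg: "(g has_derivative L) (at 0)" and cL: "\<And>c h. L (c *s h) = c *s L h"
    using vholo_on_has_derivative[OF hol] by (metis centre_in_ball zero_less_one)
  have lin: "linear L" using dg has_derivative_bounded_linear bounded_linear.linear by blast
  have "g w = L w" if w: "norm w < 1" for w
  proof (cases "w = 0")
    case True then show ?thesis using g0 lin by (simp add: linear_0)
  next
    case False
    define u where "u = complex_of_real (inverse (norm w)) *s w"
    have u: "norm u = 1" using False by (simp add: u_def norm_smult_vec norm_inverse)
    have wu: "w = complex_of_real (norm w) *s u" using False by (simp add: u_def vec_eq_iff)
    have "g w = complex_of_real (norm w) *s L u"
      using ball_isometry_on_line[OF hol into g0 iso dg u, of "complex_of_real (norm w)"] w wu by simp
    also have "\<dots> = L w" using wu cL by metis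
    finally show ?thesis .
  qed
  then show thesis using that cL lin by blast
qed

lemma complex_homogeneous_norm_eq:
  fixes L :: "complex^'n::finite \<Rightarrow> complex^'n"
  assumes cL: "\<And>c h. L (c *s h) = c *s L h" and iso: "\<And>w. norm w < 1 \<Longrightarrow> norm (L w) = norm w"
  shows "norm (L w) = norm w"
proof (cases "w = 0")
  case True then show ?thesis using iso by simp
next
  case False
  define r where "r = inverse (2 * norm w)"
  have r: "r > 0" and rw: "r * norm w = 1/2" using False by (simp_all add: r_def)
  then have "norm (L (complex_of_real r *s w)) = 1/2"
    using iso by (simp add: norm_smult_vec abs_of_pos[OF r])
  then have "r * norm (L w) = 1/2" using cL by (simp add: norm_smult_vec abs_of_pos[OF r])
  with rw show ?thesis using r by (metis mult_left_cancel order_less_irrefl)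
qed

lemma linear_isometry_moebius_map:
  fixes L :: "complex^'n::finite \<Rightarrow> complex^'n"
  assumes lin: "linear L" and cL: "\<And>c h. L (c *s h) = c *s L h"
    and iso: "\<And>w. norm w < 1 \<Longrightarrow> norm (L w) = norm w"
  obtains D where "D \<in> U_n1" "\<And>w. moebius_map D w = L w"
proof -
  have iso': "norm (L w) = norm w" for w by (rule complex_homogeneous_norm_eq[OF cL iso])
  have cinner_L: "cinner (L x) (L y) = cinner x y" for x y
    by (rule cinner_eq_if_norms_eq) (simp_all add: iso' linear_add[OF lin, symmetric] cL[symmetric])
  define D :: "complex^('n option)^('n option)" where
    "D = (\<chi> x y. case x of None \<Rightarrow> (case y of None \<Rightarrow> 1 | Some _ \<Rightarrow> 0)
      | Some a \<Rightarrow> (case y of None \<Rightarrow> 0 | Some b \<Rightarrow> L (axis b 1) $ a))"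
  have D: "D $ None $ None = 1" "D $ None $ Some b = 0" "D $ Some a $ None = 0"
    "D $ Some a $ Some b = L (axis b 1) $ a" for a b
    by (simp_all add: D_def)
  show thesis
  proof
    have "(conj_transpose D ** Jn1 ** D) $ x $ y = Jn1 $ x $ y" for x y
    proof (cases x; cases y)
      fix a b assume xy: "x = Some a" "y = Some b"
      have "(\<Sum>i\<in>UNIV. cnj (L (axis a 1) $ i) * L (axis b 1) $ i) = cinner (L (axis b 1)) (L (axis a 1))"
        by (simp add: cinner_def mult.commute)
      also have "\<dots> = (if a = b then 1 else 0)" by (simp add: cinner_L cinner_axis)
      finally show ?thesis using xy by (simp add: conj_transpose_Jn1_mult_nth D Jn1_nth)
    qed (simp_all add: conj_transpose_Jn1_mult_nth D Jn1_nth)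
    then show "D \<in> U_n1" by (simp add: U_n1_def vec_eq_iff)
    fix w
    have Lw: "L w = (\<Sum>b\<in>UNIV. w $ b *s L (axis b 1))"
      by (subst basis_expansion[of w, symmetric]) (simp add: linear_sum[OF lin] cL)
    have "(D *v lift w) $ None = 1"
      by (simp add: matrix_vector_mult_def sum_option_UNIV D)
    moreover have "(D *v lift w) $ Some a = L w $ a" for a
      by (simp add: matrix_vector_mult_def sum_option_UNIV D Lw sum_component mult.commute)
    ultimately show "moebius_map D w = L w" by (simp add: moebius_map_def vec_eq_iff)
  qed
qed

section \<open>Automorphisms of the ball\<close>

lemma biholo_pair_ball_self_map:
  "biholo_pair (ball 0 1) g h \<Longrightarrow> norm w < 1 \<Longrightarrow> norm (g w) < 1"
  by (simp add: biholo_pair_def)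

lemma ball_aut_fixing_0_moebius:
  fixes g h :: "complex^'n::finite \<Rightarrow> complex^'n"
  assumes gh: "biholo_pair (ball 0 1) g h" and g0: "g 0 = 0" and h0: "h 0 = 0"
  obtains D where "D \<in> U_n1" "\<And>w. norm w < 1 \<Longrightarrow> g w = moebius_map D w"
proof -
  note hg = biholo_pair_sym[OF gh]
  have holg: "vholo_on (ball 0 1) g" and holh: "vholo_on (ball 0 1) h"
    and hg_id: "\<And>w. norm w < 1 \<Longrightarrow> h (g w) = w"
    using gh by (simp_all add: biholo_pair_def)
  have iso: "norm (g w) = norm w" if w: "norm w < 1" for w
    using ball_self_map_norm_le[OF holg biholo_pair_ball_self_map[OF gh] g0 w]
      ball_self_map_norm_le[OF holh biholo_pair_ball_self_map[OF hg] h0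
        biholo_pair_ball_self_map[OF gh w]] hg_id[OF w]
    by simp
  obtain L where L: "\<And>w. norm w < 1 \<Longrightarrow> g w = L w" and "\<And>c h. L (c *s h) = c *s L h" "linear L"
    using ball_isometry_linear[OF holg biholo_pair_ball_self_map[OF gh] g0 iso] by blast
  moreover have "\<And>w. norm w < 1 \<Longrightarrow> norm (L w) = norm w" using iso L by metis
  ultimately obtain D where "D \<in> U_n1" "\<And>w. moebius_map D w = L w"
    using linear_isometry_moebius_map by metis
  then show thesis using L that by metis
qed

text \<open>The boost \<open>M\<close> moves \<open>0\<close> to \<open>\<psi> 0\<close>, so \<open>\<phi> \<circ> moebius_map M\<close> fixes the origin.\<close>

lemma ball_aut_moebius:
  fixes \<phi> \<psi> :: "complex^'n::finite \<Rightarrow> complex^'n"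
  assumes \<phi>\<psi>: "biholo_pair (ball 0 1) \<phi> \<psi>"
  obtains A where "A \<in> U_n1" "\<And>w. norm w < 1 \<Longrightarrow> \<phi> w = moebius_map A w"
proof -
  define b where "b = \<psi> 0"
  have b: "norm b < 1" using \<phi>\<psi> by (simp add: biholo_pair_def b_def)
  define M where "M = boost b"
  define M' where "M' = U_inverse M"
  have M: "M \<in> U_n1" and M0: "moebius_map M 0 = b"
    using boost_in_U_n1[OF b] moebius_map_boost_0[OF b] by (simp_all add: M_def)
  have M': "M' \<in> U_n1" and M'M: "M' ** M = mat 1" and MM': "M ** M' = mat 1"
    using U_inverse_in_U_n1[OF M] U_inverse_mult[OF M] mult_U_inverse[OF M] by (simp_all add: M'_def)
  have "biholo_pair (ball 0 1) (\<lambda>w. \<phi> (moebius_map M w)) (\<lambda>w. moebius_map M' (\<psi> w))"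
    using biholo_pair_compose[OF \<phi>\<psi> moebius_map_biholo_pair[OF M]] by (simp add: M'_def)
  moreover have "\<phi> (moebius_map M 0) = 0" using \<phi>\<psi> by (simp add: biholo_pair_def M0 b_def)
  moreover have "moebius_map M' (\<psi> 0) = 0"
    using moebius_map_comp[OF M, of 0 M'] M'M by (simp add: b_def[symmetric] M0[symmetric])
  ultimately obtain D where D: "D \<in> U_n1" and GD: "\<And>w. norm w < 1 \<Longrightarrow> \<phi> (moebius_map M w) = moebius_map D w"
    using ball_aut_fixing_0_moebius by blast
  show thesis
  proof
    show "D ** M' \<in> U_n1" using U_n1_mult[OF D M'] .
    fix w :: "complex^'n" assume w: "norm w < 1"
    have "\<phi> w = \<phi> (moebius_map M (moebius_map M' w))"
      using moebius_map_comp[OF M' w, of M] MM' by simp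
    also have "\<dots> = moebius_map (D ** M') w"
      using GD[OF moebius_map_in_ball[OF M' w]] moebius_map_comp[OF M' w] by simp
    finally show "\<phi> w = moebius_map (D ** M') w" .
  qed
qed

section \<open>Automorphisms of the punctured plane\<close>

definition punctured_plane_aut :: "(complex \<Rightarrow> complex) \<Rightarrow> bool" where
  "punctured_plane_aut F \<longleftrightarrow> F holomorphic_on -{0} \<and> inj_on F (-{0}) \<and> F ` (-{0}) = -{0}"

lemma punctured_plane_aut_nonzero: "punctured_plane_aut F \<Longrightarrow> t \<noteq> 0 \<Longrightarrow> F t \<noteq> 0"
  by (auto simp: punctured_plane_aut_def)

lemma inverse_image_punctured_plane: "inverse ` (-{0::complex}) = -{0}"
  by (auto intro!: image_eqI[of _ inverse, OF inverse_inverse_eq[symmetric]])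

lemma punctured_plane_aut_inverse_comp:
  assumes "punctured_plane_aut F"
  shows "punctured_plane_aut (inverse \<circ> F)"
  unfolding punctured_plane_aut_def
proof (intro conjI)
  show "(inverse \<circ> F) holomorphic_on -{0}"
    using assms punctured_plane_aut_nonzero[OF assms]
    by (auto intro!: holomorphic_intros simp: o_def punctured_plane_aut_def)
  show "inj_on (inverse \<circ> F) (-{0})"
    using assms by (intro comp_inj_on) (auto simp: punctured_plane_aut_def inj_on_def)
  have "(inverse \<circ> F) ` (-{0}) = inverse ` (F ` (-{0}))" by (rule image_comp[symmetric])
  then show "(inverse \<circ> F) ` (-{0}) = -{0}"
    using assms by (simp add: punctured_plane_aut_def inverse_image_punctured_plane)
qed

lemma punctured_plane_aut_comp_inverse:
  assumes "punctured_plane_aut F"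
  shows "punctured_plane_aut (F \<circ> inverse)"
  unfolding punctured_plane_aut_def
proof (intro conjI)
  show "(F \<circ> inverse) holomorphic_on -{0}"
    using assms by (intro holomorphic_on_compose) (auto intro!: holomorphic_intros
        holomorphic_on_subset[of F "-{0}"] simp: punctured_plane_aut_def)
  show "inj_on (F \<circ> inverse) (-{0})"
    using assms by (intro comp_inj_on)
      (auto simp: inj_on_def inverse_image_punctured_plane punctured_plane_aut_def)
  have "(F \<circ> inverse) ` (-{0}) = F ` (inverse ` (-{0}))" by (rule image_comp[symmetric])
  then show "(F \<circ> inverse) ` (-{0}) = -{0}"
    using assms by (simp add: punctured_plane_aut_def inverse_image_punctured_plane)
qed

lemma separating_balls:
  fixes a b :: "'a::metric_space"
  assumes "open S" "a \<in> S" "b \<in> S" "a \<noteq> b"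
  obtains r where "r > 0" "ball a r \<subseteq> S" "ball b r \<subseteq> S" "ball a r \<inter> ball b r = {}"
proof -
  obtain ra rb where "ra > 0" "ball a ra \<subseteq> S" "rb > 0" "ball b rb \<subseteq> S"
    using assms by (meson openE)
  define r where "r = min (min ra rb) (dist a b / 2)"
  have "r \<le> ra" "r \<le> rb" by (simp_all add: r_def)
  then have "ball a r \<subseteq> S" "ball b r \<subseteq> S"
    using \<open>ball a ra \<subseteq> S\<close> \<open>ball b rb \<subseteq> S\<close> subset_ball by blast+
  moreover have "r > 0" using \<open>ra > 0\<close> \<open>rb > 0\<close> assms(4) by (simp add: r_def)
  moreover have "dist a b < r + r" if "x \<in> ball a r" "x \<in> ball b r" for x
    using that dist_triangle[of a b x] by (simp add: dist_commute)
  then have "ball a r \<inter> ball b r = {}" by (fastforce simp: r_def)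
  ultimately show thesis using that by blast
qed

text \<open>If \<open>G a = G b\<close> with \<open>b \<noteq> a\<close>, the open images of disjoint small balls around \<open>a\<close> and \<open>b\<close> both
  contain \<open>G a\<close>, so some value \<open>y \<noteq> G a\<close> is taken twice away from \<open>a\<close>.\<close>

lemma holomorphic_inj_on_insert:
  assumes hol: "G holomorphic_on S" and S: "open S" and "a \<in> S" and inj: "inj_on G (S - {a})"
  shows "inj_on G S"
proof (rule ccontr)
  assume "\<not> inj_on G S"
  then obtain b where b: "b \<in> S" "b \<noteq> a" "G b = G a"
    using inj \<open>a \<in> S\<close> unfolding inj_on_def by (metis DiffI singletonD)
  obtain r where r: "r > 0" and Sa: "ball a r \<subseteq> S" and "ball b r \<subseteq> S"
    and disj: "ball a r \<inter> ball b r = {}"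
    using separating_balls[OF S \<open>a \<in> S\<close> b(1) b(2)[symmetric]] by blast
  moreover have "a \<notin> ball b r" and b_out: "b \<notin> ball a r"
    using disj centre_in_ball[of a r] centre_in_ball[of b r] r by blast+
  ultimately have Sb: "ball b r \<subseteq> S - {a}" by blast
  have G_ne: "G x \<noteq> G a" if "x \<in> ball a r" "x \<noteq> a" for x
  proof
    assume "G x = G a"
    then have "x = b" using inj_onD[OF inj, of x b] b that Sa by auto
    then show False using that b_out by simp
  qed
  have inj_a: "inj_on G (ball a r)"
  proof (rule inj_onI)
    fix x y assume xy: "x \<in> ball a r" "y \<in> ball a r" "G x = G y"
    show "x = y"
    proof (cases "x = a \<or> y = a")
      case True
      then show ?thesis using G_ne xy by metis
    next
      case False
      then show ?thesis using inj_onD[OF inj] xy Sa by blast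
    qed
  qed
  have "open (G ` ball a r)"
    by (rule open_mapping_thm3[OF holomorphic_on_subset[OF hol Sa] open_ball inj_a])
  moreover have "open (G ` ball b r)"
    using Sb by (intro open_mapping_thm3 holomorphic_on_subset[OF hol] inj_on_subset[OF inj]) auto
  moreover have "G a \<in> G ` ball a r" "G a \<in> G ` ball b r"
    using r b(3) by (metis centre_in_ball image_eqI)+
  ultimately obtain e where e: "e > 0" "ball (G a) e \<subseteq> G ` ball a r \<inter> G ` ball b r"
    by (meson IntI open_Int openE)
  define y where "y = G a + of_real (e/2)"
  have "y \<in> ball (G a) e" "y \<noteq> G a" using e by (simp_all add: y_def dist_norm)
  then have "y \<in> G ` ball a r" "y \<in> G ` ball b r" using e by blast+
  then obtain s0 s1 where s0: "s0 \<in> ball a r" "G s0 = y" and s1: "s1 \<in> ball b r" "G s1 = y"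
    by (metis imageE)
  then have "s0 \<noteq> a" using \<open>y \<noteq> G a\<close> by auto
  then have "s0 \<in> S - {a}" "s1 \<in> S - {a}" using s0(1) s1(1) Sa Sb by auto
  then have "s0 = s1" using inj_onD[OF inj] s0(2) s1(2) by metis
  then show False using s0 s1 disj by blast
qed

text \<open>Otherwise Casorati-Weierstrass makes the image of the punctured unit disc dense, while
  the image of the exterior of the unit disc is open and disjoint from it.\<close>

lemma punctured_plane_aut_not_essential:
  assumes "punctured_plane_aut F"
  shows "(\<exists>l. (F \<longlongrightarrow> l) (at 0)) \<or> (\<exists>l. ((inverse \<circ> F) \<longlongrightarrow> l) (at 0))"
proof (rule ccontr)
  have hol: "F holomorphic_on -{0}" and inj: "inj_on F (-{0})"
    using assms by (simp_all add: punctured_plane_aut_def)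
  assume "\<not> ?thesis"
  moreover have "F holomorphic_on ball 0 1 - {0}"
    using hol by (rule holomorphic_on_subset) auto
  ultimately have "closure (F ` (ball 0 1 - {0})) = UNIV"
    using Casorati_Weierstrass[of "ball 0 1" 0 F] by auto
  moreover have "open (F ` (- cball 0 1))"
    using hol inj by (intro open_mapping_thm3) (auto elim: holomorphic_on_subset inj_on_subset)
  moreover have "F ` (- cball 0 1) \<inter> F ` (ball 0 1 - {0}) = {}"
  proof -
    have False if "x \<in> - cball 0 1" "y \<in> ball 0 1 - {0}" "F x = F y" for x y
    proof -
      have "x \<noteq> 0" using that(1) by auto
      then have "x = y" using inj_onD[OF inj that(3)] that(2) by auto
      then show False using that by auto
    qed
    then show ?thesis by blast
  qed
  ultimately have "F ` (- cball 0 1) = {}"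
    using open_Int_closure_eq_empty by blast
  moreover have "(2::complex) \<in> - cball 0 1" by simp
  ultimately show False by blast
qed

lemma punctured_plane_aut_limit_eq_0:
  assumes aut: "punctured_plane_aut F" and lim: "(F \<longlongrightarrow> l) (at 0)"
  shows "l = 0"
proof (rule ccontr)
  assume "l \<noteq> 0"
  then have "l \<in> F ` (-{0})" using aut by (simp add: punctured_plane_aut_def)
  then obtain t where t: "t \<noteq> 0" "F t = l" by auto
  define G where "G = (\<lambda>y. if y = 0 then l else F y)"
  have "G holomorphic_on UNIV"
    unfolding G_def using aut lim
    by (intro removable_singularity) (auto simp: punctured_plane_aut_def Compl_eq_Diff_UNIV)
  moreover have "inj_on G (UNIV - {0})"
    using aut by (auto simp: G_def inj_on_def punctured_plane_aut_def)
  ultimately have "inj_on G UNIV" using holomorphic_inj_on_insert[of G UNIV 0] by auto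
  moreover have "G 0 = G t" using t by (simp add: G_def)
  ultimately show False using t(1) by (auto dest: inj_onD)
qed

lemma punctured_plane_aut_tendsto_at_0:
  assumes aut: "punctured_plane_aut F"
  shows "(F \<longlongrightarrow> 0) (at 0) \<or> ((inverse \<circ> F) \<longlongrightarrow> 0) (at 0)"
  using punctured_plane_aut_not_essential[OF aut]
proof
  assume "\<exists>l. (F \<longlongrightarrow> l) (at 0)"
  then show ?thesis using punctured_plane_aut_limit_eq_0[OF aut] by blast
next
  assume "\<exists>l. ((inverse \<circ> F) \<longlongrightarrow> l) (at 0)"
  then show ?thesis
    using punctured_plane_aut_limit_eq_0[OF punctured_plane_aut_inverse_comp[OF aut]] by blast
qed

lemma punctured_plane_aut_tendsto_at_infinity:
  assumes aut: "punctured_plane_aut F"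
  shows "(F \<longlongrightarrow> 0) at_infinity \<or> ((inverse \<circ> F) \<longlongrightarrow> 0) at_infinity"
  using punctured_plane_aut_tendsto_at_0[OF punctured_plane_aut_comp_inverse[OF aut]]
  unfolding lim_at_infinity_0 by (simp add: o_assoc)

lemma tendsto_at_infinity_if_0:
  fixes F :: "complex \<Rightarrow> 'a::topological_space"
  assumes "(F \<longlongrightarrow> l) at_infinity"
  shows "((\<lambda>y. if y = 0 then c else F y) \<longlongrightarrow> l) at_infinity"
proof (rule Lim_transform_eventually[OF assms])
  have "eventually (\<lambda>x::complex. norm x \<ge> 1) at_infinity"
    by (auto simp: eventually_at_infinity)
  then show "eventually (\<lambda>x. F x = (if x = 0 then c else F x)) at_infinity"
    by (rule eventually_mono) auto
qed

lemma punctured_plane_aut_not_tendsto_0_at_0_and_infinity: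
  assumes aut: "punctured_plane_aut F" and "(F \<longlongrightarrow> 0) (at 0)"
  shows "\<not> (F \<longlongrightarrow> 0) at_infinity"
proof
  assume inf: "(F \<longlongrightarrow> 0) at_infinity"
  define G where "G = (\<lambda>y. if y = 0 then 0 else F y)"
  have "G holomorphic_on UNIV"
    unfolding G_def using aut assms(2)
    by (intro removable_singularity) (auto simp: punctured_plane_aut_def Compl_eq_Diff_UNIV)
  moreover have "(G \<longlongrightarrow> 0) at_infinity"
    unfolding G_def using inf by (rule tendsto_at_infinity_if_0)
  ultimately have "G 1 = 0" using Liouville_weak by blast
  then show False using punctured_plane_aut_nonzero[OF aut, of 1] by (simp add: G_def)
qed

text \<open>Such a polynomial is \<open>z H(z)\<close> with \<open>H(0) = G'(0) \<noteq> 0\<close>, so \<open>H\<close> has no zeros and is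
  constant by the fundamental theorem of algebra.\<close>

lemma polynomial_function_simple_zero_only_at_0:
  fixes a :: "nat \<Rightarrow> complex"
  assumes G: "\<And>z. G z = (\<Sum>i\<le>n. a i * z^i)" and G0: "G 0 = 0"
    and nz: "\<And>z. z \<noteq> 0 \<Longrightarrow> G z \<noteq> 0" and dG: "deriv G 0 \<noteq> 0"
  shows "G z = a 1 * z"
proof (cases n)
  case 0
  then show ?thesis using G[of 1] G0 G[of 0] nz[of 1] by simp
next
  case (Suc m)
  define H where "H z = (\<Sum>i\<le>m. a (Suc i) * z^i)" for z
  have GH: "G = (\<lambda>z. z * H z)"
  proof
    fix z
    have "G z = a 0 + (\<Sum>i\<le>m. a (Suc i) * z^Suc i)"
      using G[of z] unfolding Suc sum.atMost_Suc_shift by (simp del: sum.atMost_Suc)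
    then show "G z = z * H z"
      using G0 G[of 0] by (simp add: H_def sum_distrib_left algebra_simps del: sum.atMost_Suc)
  qed
  have "H holomorphic_on UNIV" unfolding H_def by (intro holomorphic_intros)
  then have "(H has_field_derivative deriv H 0) (at 0)" by (simp add: holomorphic_derivI)
  from DERIV_mult[OF DERIV_ident this]
  have "((\<lambda>z. z * H z) has_field_derivative H 0) (at 0)" by simp
  then have "H 0 \<noteq> 0" using dG GH DERIV_imp_deriv by fastforce
  then have Hnz: "H z \<noteq> 0" for z
    using nz[of z] GH by (cases "z = 0") auto
  have coef: "\<forall>i\<in>{1..m}. a (Suc i) = 0"
  proof (rule ccontr)
    assume "\<not> ?thesis"
    then obtain z where "(\<Sum>i\<le>m. (\<lambda>i. a (Suc i)) i * z^i) = 0"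
      using fundamental_theorem_of_algebra[of "\<lambda>i. a (Suc i)" m] by blast
    then show False using Hnz[of z] by (simp add: H_def)
  qed
  have "H z = (\<Sum>i\<in>insert 0 {1..m}. a (Suc i) * z^i)"
    unfolding H_def by (rule sum.cong) auto
  also have "\<dots> = a 1"
    using coef by (subst sum.insert) auto
  finally show ?thesis using GH by (simp add: mult.commute)
qed

lemma punctured_plane_aut_linear:
  assumes aut: "punctured_plane_aut F"
    and l0: "(F \<longlongrightarrow> 0) (at 0)" and linf: "((inverse \<circ> F) \<longlongrightarrow> 0) at_infinity"
  shows "t \<noteq> 0 \<Longrightarrow> F t = F 1 * t"
proof -
  define G where "G = (\<lambda>y. if y = 0 then 0 else F y)"
  have holG: "G holomorphic_on UNIV"
    unfolding G_def using aut l0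
    by (intro removable_singularity) (auto simp: punctured_plane_aut_def Compl_eq_Diff_UNIV)
  have "inj_on G (UNIV - {0})"
    using aut by (auto simp: G_def inj_on_def punctured_plane_aut_def)
  then have "inj_on G UNIV" using holomorphic_inj_on_insert[OF holG] by auto
  then have dG: "deriv G 0 \<noteq> 0"
    using holomorphic_injective_imp_regular[OF holG] by simp
  have "inverse \<circ> G = (\<lambda>y. if y = 0 then 0 else (inverse \<circ> F) y)"
    by (auto simp: G_def fun_eq_iff)
  then have "((inverse \<circ> G) \<longlongrightarrow> 0) at_infinity"
    using tendsto_at_infinity_if_0[OF linf, of 0] by simp
  then obtain a n where an: "\<And>z. G z = (\<Sum>i\<le>n. a i * z^i)"
    using pole_at_infinity[OF holG] by blast
  have "G z = a 1 * z" for z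
  proof (rule polynomial_function_simple_zero_only_at_0[OF an])
    show "G 0 = 0" by (simp add: G_def)
    show "z \<noteq> 0 \<Longrightarrow> G z \<noteq> 0" for z
      using punctured_plane_aut_nonzero[OF aut] by (simp add: G_def)
  qed (rule dG)
  then show "t \<noteq> 0 \<Longrightarrow> F t = F 1 * t"
    using G_def by (metis mult.right_neutral zero_neq_one)
qed

lemma punctured_plane_aut_cases:
  assumes aut: "punctured_plane_aut F"
  shows "(\<forall>t. t \<noteq> 0 \<longrightarrow> F t = F 1 * t) \<or> (\<forall>t. t \<noteq> 0 \<longrightarrow> F t = F 1 / t)"
  using punctured_plane_aut_tendsto_at_0[OF aut] punctured_plane_aut_tendsto_at_infinity[OF aut]
proof (elim disjE)
  assume "(F \<longlongrightarrow> 0) (at 0)" "((inverse \<circ> F) \<longlongrightarrow> 0) at_infinity"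
  then show ?thesis using punctured_plane_aut_linear[OF aut] by blast
next
  assume F0: "((inverse \<circ> F) \<longlongrightarrow> 0) (at 0)" and Finf: "(F \<longlongrightarrow> 0) at_infinity"
  have "((F \<circ> inverse) \<longlongrightarrow> 0) (at 0)" using Finf unfolding lim_at_infinity_0 .
  moreover have "((inverse \<circ> (F \<circ> inverse)) \<longlongrightarrow> 0) at_infinity"
    using F0 unfolding lim_at_infinity_0 by (simp add: o_assoc o_def)
  ultimately have "t \<noteq> 0 \<Longrightarrow> (F \<circ> inverse) t = (F \<circ> inverse) 1 * t" for t
    by (rule punctured_plane_aut_linear[OF punctured_plane_aut_comp_inverse[OF aut]])
  then have "t \<noteq> 0 \<Longrightarrow> F t = F 1 / t" for t
    by (metis comp_apply divide_inverse inverse_1 inverse_inverse_eq inverse_nonzero_iff_nonzero)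
  then show ?thesis by blast
next
  assume "(F \<longlongrightarrow> 0) (at 0)" "(F \<longlongrightarrow> 0) at_infinity"
  then show ?thesis using punctured_plane_aut_not_tendsto_0_at_0_and_infinity[OF aut] by blast
next
  assume "((inverse \<circ> F) \<longlongrightarrow> 0) (at 0)" "((inverse \<circ> F) \<longlongrightarrow> 0) at_infinity"
  then show ?thesis
    using punctured_plane_aut_not_tendsto_0_at_0_and_infinity[OF punctured_plane_aut_inverse_comp[OF aut]]
    by blast
qed

section \<open>Biholomorphisms of the cone\<close>

lemma biholo_Cn1_chart_moebius:
  assumes "biholo_pair Cn1 f g"
  obtains A where "A \<in> U_n1" "\<And>z. z \<in> Cn1 \<Longrightarrow> chart (f z) = moebius_map A (chart z)"
proof -
  obtain A where "A \<in> U_n1" and A: "\<And>w. norm w < 1 \<Longrightarrow> ball_map f w = moebius_map A w"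
    using ball_aut_moebius[OF ball_map_biholo_pair[OF assms]] by blast
  moreover have "chart (f z) = moebius_map A (chart z)" if "z \<in> Cn1" for z
    using chart_comp_eq_ball_map[OF assms that] A chart_in_ball[OF that] by simp
  ultimately show thesis using that by blast
qed

lemma coord_eq_if_chart_eq:
  assumes "y $ None \<noteq> 0" "chart y = chart x"
  shows "y $ Some i = y $ None * (x $ Some i / x $ None)"
proof -
  have "y $ Some i / y $ None = x $ Some i / x $ None"
    using arg_cong[OF assms(2), of "\<lambda>v. v $ i"] by simp
  then show ?thesis using assms(1) by (simp add: field_simps)
qed

lemma biholo_Cn1_smult_lift:
  assumes fg: "biholo_pair Cn1 f g" and w: "norm w < 1" and t: "t \<noteq> 0"
  shows "f (t *s lift w) = f (t *s lift w) $ None *s lift (ball_map f w)"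
proof -
  have z: "t *s lift w \<in> Cn1" using smult_lift_in_Cn1 w t by blast
  then have "f (t *s lift w) \<in> Cn1" using fg by (simp add: biholo_pair_def)
  moreover have "chart (f (t *s lift w)) = ball_map f w"
    using chart_comp_eq_ball_map[OF fg z] t by (simp add: chart_smult)
  ultimately show ?thesis using smult_lift_chart Cn1_coord0_nonzero by metis
qed

lemma biholo_Cn1_fibre_aut:
  assumes fg: "biholo_pair Cn1 f g" and w: "norm w < 1"
  shows "punctured_plane_aut (\<lambda>t. f (t *s lift w) $ None)"
proof -
  define F where "F t = f (t *s lift w) $ None" for t
  define v where "v = ball_map f w"
  have hf: "vholo_on Cn1 f" and fC: "\<And>z. z \<in> Cn1 \<Longrightarrow> f z \<in> Cn1"
    and gC: "\<And>z. z \<in> Cn1 \<Longrightarrow> g z \<in> Cn1" and fg_id: "\<And>z. z \<in> Cn1 \<Longrightarrow> f (g z) = z"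
    and gf_id: "\<And>z. z \<in> Cn1 \<Longrightarrow> g (f z) = z"
    using fg by (simp_all add: biholo_pair_def)
  have inC: "t \<noteq> 0 \<Longrightarrow> t *s lift w \<in> Cn1" for t using smult_lift_in_Cn1 w by blast
  have fF: "f (t *s lift w) = F t *s lift v" if "t \<noteq> 0" for t
    unfolding F_def v_def by (rule biholo_Cn1_smult_lift[OF fg w that])
  have "F holomorphic_on -{0}"
    using hf inC holomorphic_on_line[of Cn1 "\<lambda>z. f z $ None" "-{0}" 0 "lift w"]
    unfolding vholo_on_def F_def by simp
  moreover have "inj_on F (-{0})"
  proof (rule inj_onI)
    fix t1 t2 assume t: "t1 \<in> -{0}" "t2 \<in> -{0}" and "F t1 = F t2"
    then have "g (f (t1 *s lift w)) = g (f (t2 *s lift w))" using fF by auto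
    then have "t1 *s lift w = t2 *s lift w" using gf_id inC t by auto
    then have "(t1 *s lift w) $ None = (t2 *s lift w) $ None" by (rule arg_cong)
    then show "t1 = t2" by simp
  qed
  moreover have "F ` (-{0}) = -{0}"
  proof
    have "F t \<noteq> 0" if "t \<noteq> 0" for t
      unfolding F_def by (rule Cn1_coord0_nonzero[OF fC[OF inC[OF that]]])
    then show "F ` (-{0}) \<subseteq> -{0}" by (intro image_subsetI) simp
    show "-{0} \<subseteq> F ` (-{0})"
    proof
      fix s :: complex assume "s \<in> -{0}"
      then have s: "s \<noteq> 0" by simp
      have v: "norm v < 1" and "ball_map g v = w"
        using ball_map_biholo_pair[OF fg] w by (simp_all add: biholo_pair_def v_def)
      have zC: "s *s lift v \<in> Cn1" using smult_lift_in_Cn1[OF s, of v] v by blast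
      define y where "y = g (s *s lift v)"
      have "y = y $ None *s lift w"
        using biholo_Cn1_smult_lift[OF biholo_pair_sym[OF fg] v s] \<open>ball_map g v = w\<close>
        unfolding y_def by metis
      then have "F (y $ None) = f y $ None" by (metis F_def)
      also have "\<dots> = s" using fg_id[OF zC] by (simp add: y_def)
      finally have "F (y $ None) = s" .
      moreover have "y $ None \<noteq> 0" using Cn1_coord0_nonzero[OF gC[OF zC]] by (simp add: y_def)
      ultimately show "s \<in> F ` (-{0})" by (intro image_eqI[of _ F "y $ None"]) auto
    qed
  qed
  ultimately show ?thesis by (simp add: punctured_plane_aut_def F_def[abs_def])
qed

text \<open>The exponent \<open>\<plusminus>1\<close> is read off from \<open>f\<^sub>0(2 lift w)/f\<^sub>0(lift w) \<in> {2, 1/2}\<close>, a continuous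
  function of \<open>w\<close> on the connected ball.\<close>

lemma biholo_Cn1_fibre_exponent:
  assumes fg: "biholo_pair Cn1 f g"
  shows "(\<forall>w\<in>ball 0 1. \<forall>t. t \<noteq> 0 \<longrightarrow> f (t *s lift w) $ None = f (lift w) $ None * t) \<or>
    (\<forall>w\<in>ball 0 1. \<forall>t. t \<noteq> 0 \<longrightarrow> f (t *s lift w) $ None = f (lift w) $ None / t)"
proof -
  have hf: "vholo_on Cn1 f" and fC: "\<And>z. z \<in> Cn1 \<Longrightarrow> f z \<in> Cn1"
    using fg by (simp_all add: biholo_pair_def)
  define c where "c w = f (lift w) $ None" for w
  define E where "E w = f ((2::complex) *s lift w) $ None / c w" for w
  have c_nz: "w \<in> ball 0 1 \<Longrightarrow> c w \<noteq> 0" for w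
    using Cn1_coord0_nonzero[OF fC] by (simp add: c_def lift_in_Cn1)
  have cases: "(\<forall>t. t \<noteq> 0 \<longrightarrow> f (t *s lift w) $ None = c w * t) \<or>
      (\<forall>t. t \<noteq> 0 \<longrightarrow> f (t *s lift w) $ None = c w / t)" if "w \<in> ball 0 1" for w
    using punctured_plane_aut_cases[OF biholo_Cn1_fibre_aut[OF fg]] that by (simp add: c_def)
  have form1: "E w = 2" if "w \<in> ball 0 1" "\<forall>t. t \<noteq> 0 \<longrightarrow> f (t *s lift w) $ None = c w * t" for w
    using that(2)[rule_format, of 2] c_nz[OF that(1)] by (simp add: E_def)
  have form2: "E w = 1/2" if "w \<in> ball 0 1" "\<forall>t. t \<noteq> 0 \<longrightarrow> f (t *s lift w) $ None = c w / t" for w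
    using that(2)[rule_format, of 2] c_nz[OF that(1)] by (simp add: E_def)
  have E_cases: "E w \<in> {2, 1/2}" if "w \<in> ball 0 1" for w
    using cases[OF that] form1[OF that] form2[OF that] by blast
  have f2: "cholo_on (ball 0 1) (\<lambda>w. f ((2::complex) *s lift w) $ None)"
    by (rule cholo_compose[OF vholo_smult_lift, where T = Cn1])
      (use hf smult_lift_in_Cn1[of "2::complex"] in \<open>auto simp: vholo_on_def\<close>)
  have "cholo_on (ball 0 1) E"
    unfolding E_def[abs_def] c_def
    by (rule cholo_divide[OF f2 cholo_on_comp_lift[OF hf]]) (use c_nz in \<open>simp add: c_def\<close>)
  then have "continuous_on (ball 0 1) E"
    by (intro continuous_at_imp_continuous_on ballI cholo_on_imp_isCont)
  moreover have "finite (E ` ball 0 1)"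
  proof (rule finite_subset)
    show "E ` ball 0 1 \<subseteq> {2, 1/2}" by (rule image_subsetI) (rule E_cases)
  qed simp
  ultimately have "E constant_on ball 0 1"
    by (rule continuous_finite_range_constant[OF connected_ball])
  then obtain e where "\<And>w. w \<in> ball 0 1 \<Longrightarrow> E w = e" unfolding constant_on_def by blast
  then have E: "w \<in> ball 0 1 \<Longrightarrow> E w = E 0" for w by simp
  show ?thesis
  proof (cases "E 0 = 2")
    case True
    have "\<forall>t. t \<noteq> 0 \<longrightarrow> f (t *s lift w) $ None = c w * t" if "w \<in> ball 0 1" for w
      using cases[OF that] form2[OF that] E[OF that] True by auto
    then show ?thesis unfolding c_def by blast
  next
    case False
    have "\<forall>t. t \<noteq> 0 \<longrightarrow> f (t *s lift w) $ None = c w / t" if "w \<in> ball 0 1" for w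
      using cases[OF that] form1[OF that] E[OF that] False by auto
    then show ?thesis unfolding c_def by blast
  qed
qed

lemma biholo_Cn1_coord0:
  assumes fg: "biholo_pair Cn1 f g"
  shows "(\<forall>z\<in>Cn1. f z $ None = f (lift (chart z)) $ None * z $ None) \<or>
    (\<forall>z\<in>Cn1. f z $ None = f (lift (chart z)) $ None * inverse (z $ None))"
proof -
  have z: "chart z \<in> ball 0 1" "z $ None \<noteq> 0" "f z = f (z $ None *s lift (chart z))" if "z \<in> Cn1" for z
    using that chart_in_ball Cn1_coord0_nonzero smult_lift_chart by metis+
  from biholo_Cn1_fibre_exponent[OF fg] show ?thesis
  proof (elim disjE)
    assume h: "\<forall>w\<in>ball 0 1. \<forall>t. t \<noteq> 0 \<longrightarrow> f (t *s lift w) $ None = f (lift w) $ None * t"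
    have "f z $ None = f (lift (chart z)) $ None * z $ None" if "z \<in> Cn1" for z
      using h[rule_format, OF z(1,2)[OF that]] z(3)[OF that] by simp
    then show ?thesis by blast
  next
    assume h: "\<forall>w\<in>ball 0 1. \<forall>t. t \<noteq> 0 \<longrightarrow> f (t *s lift w) $ None = f (lift w) $ None / t"
    have "f z $ None = f (lift (chart z)) $ None * inverse (z $ None)" if "z \<in> Cn1" for z
      using h[rule_format, OF z(1,2)[OF that]] z(3)[OF that] by (simp add: divide_inverse)
    then show ?thesis by blast
  qed
qed

theorem theorem2p1:
  fixes f :: "complex^('n::finite option) \<Rightarrow> complex^('n option)"
  assumes "biholo_self (Cn1 :: (complex^('n option)) set) f"
  shows "\<exists>(c :: complex^'n \<Rightarrow> complex) (A :: complex^('n option)^('n option)).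
    cholo_on (ball 0 1) c \<and> (\<forall>w\<in>ball 0 1. c w \<noteq> 0) \<and> PU_rep A \<and>
    ((\<forall>z\<in>Cn1. f z $ None = c (\<chi> i. z $ Some i / z $ None) * z $ None) \<or>
     (\<forall>z\<in>Cn1. f z $ None = c (\<chi> i. z $ Some i / z $ None) * inverse (z $ None))) \<and>
    (\<forall>z\<in>Cn1. \<forall>i::'n. f z $ Some i =
        f z $ None * ((\<Sum>j\<in>UNIV. A $ Some i $ j * z $ j) / (\<Sum>j\<in>UNIV. A $ None $ j * z $ j)))"
proof -
  define g where "g = inv_into Cn1 f"
  have fg: "biholo_pair Cn1 f g"
    unfolding g_def using assms by (rule biholo_self_imp_biholo_pair)
  then have hf: "vholo_on Cn1 f" and fC: "\<And>z. z \<in> Cn1 \<Longrightarrow> f z \<in> Cn1"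
    by (simp_all add: biholo_pair_def)
  obtain A where A: "A \<in> U_n1" and fA: "\<And>z. z \<in> Cn1 \<Longrightarrow> chart (f z) = moebius_map A (chart z)"
    using biholo_Cn1_chart_moebius[OF fg] by blast
  define c where "c w = f (lift w) $ None" for w
  have "cholo_on (ball 0 1) c"
    unfolding c_def[abs_def] by (rule cholo_on_comp_lift[OF hf])
  moreover have "\<forall>w\<in>ball 0 1. c w \<noteq> 0"
    using Cn1_coord0_nonzero[OF fC] by (simp add: c_def lift_in_Cn1)
  moreover have "f z $ Some i =
      f z $ None * ((\<Sum>j\<in>UNIV. A $ Some i $ j * z $ j) / (\<Sum>j\<in>UNIV. A $ None $ j * z $ j))"
    if "z \<in> Cn1" for z i
    using coord_eq_if_chart_eq[OF Cn1_coord0_nonzero[OF fC[OF that]], of "A *v z"]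
      fA[OF that] chart_mult_vec[OF Cn1_coord0_nonzero[OF that]]
    by (simp add: matrix_vector_mult_def)
  moreover have "(\<forall>z\<in>Cn1. f z $ None = c (\<chi> i. z $ Some i / z $ None) * z $ None) \<or>
     (\<forall>z\<in>Cn1. f z $ None = c (\<chi> i. z $ Some i / z $ None) * inverse (z $ None))"
    using biholo_Cn1_coord0[OF fg] by (simp add: c_def chart_def)
  ultimately show ?thesis using U_n1_imp_PU_rep[OF A] by blast
qed

end
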